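(* Assume (A1)–(A3). If $m_1<0$, then for every $\theta>0$ and $k\in\mathbb N$ there exist $C>0$ and $\delta>0$ such that for all $i\in\mathbb N$ and $n\in\mathbb N$, \[\mathbb P_{(i,0)}\bigl(|Y_1(T_1(k))|\ge n\bigr)\le C\exp(\theta i-\delta n),\] where $T_1(k)=\inf\{n>0: X_1(n)=k\}$.
   Context: Let $\mathbb N=\{0,1,2,\dots\}$ and fix an integer $k_0\ge1$. Let $\mu$, $\mu'_j$ ($0\le j<k_0$), $\mu''_i$ ($0\le i<k_0$), $\mu_{ij}$ ($0\le i,j<k_0$) be probability measures on $\mathbb Z^2$. The random walk $Z=(X(n),Y(n))$ on $\mathbb N^2$ has transition probabilities $p((i,j)\to(i',j'))$ equal to $\mu(i'-i,j'-j)$ if $i,j\ge k_0$; $\mu'_j(i'-i,j'-j)$ if $i\ge k_0$, $0\le j<k_0$; $\mu''_i(i'-i,j'-j)$ if $0\le i<k_0$, $j\ge k_0$; $\mu_{ij}(i'-i,j'-j)$ if $0\le i,j<k_0$. Assumptions: (A1) $\mu(a,b)=0$ if $a<-k_0$ or $b<-k_0$; $\mu'_j(a,b)=0$ if $a<-k_0$ or $b<-j$; $\mu''_i(a,b)=0$ if $b<-k_0$ or $a<-i$; $\mu_{ij}(a,b)=0$ if $a<-i$ or $b<-j$. (A2) There are $\delta,\gamma,C>0$ with $\sup_{(i,j)\in\mathbb N^2}\mathbb E_{(i,j)}[\exp(\delta(X(1)-i)+\gamma(Y(1)-j))]\le C$. (A3) $Z_0,Z_1,Z_2,Z$ are irreducible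 on their state spaces. $Z_0$: random walk on $\mathbb Z^2$ with increment law $\mu$; $m_1=\sum a\mu(a,b)$. $Z_1=(X_1,Y_1)$: Markov chain on $\mathbb N\times\mathbb Z$ with transitions $\mu(i'-i,j'-j)$ from $(i,j)$ if $i\ge k_0$ and $\mu''_i(i'-i,j'-j)$ if $0\le i<k_0$; $\mathbb P_{(i,j)}$ is its law from $(i,j)$. $Z_2$: Markov chain on $\mathbb Z\times\mathbb N$ with transitions $\mu$ if $j\ge k_0$ and $\mu'_j$ if $0\le j<k_0$. *)

theory Defs
  imports "HOL-Probability.Probability"
begin

type_synonym state = "int \<times> int"
type_synonym kernel = "state \<Rightarrow> state pmf"

definition shift :: "state \<Rightarrow> state pmf \<Rightarrow> state pmf" where
  "shift z m = map_pmf (\<lambda>(a,b). (fst z + a, snd z + b)) m"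

text \<open>Transition kernel of the walk Z on N^2.
  mu1 j plays the role of mu'_j (i >= k0, j < k0),
  mu2 i plays the role of mu''_i (i < k0, j >= k0),
  mu0 i j plays the role of mu_ij.\<close>
definition kerZ :: "int \<Rightarrow> state pmf \<Rightarrow> (nat \<Rightarrow> state pmf) \<Rightarrow> (nat \<Rightarrow> state pmf)
    \<Rightarrow> (nat \<Rightarrow> nat \<Rightarrow> state pmf) \<Rightarrow> kernel" where
  "kerZ k0 mu mu1 mu2 mu0 z = shift z
     (if fst z \<ge> k0 \<and> snd z \<ge> k0 then mu
      else if fst z \<ge> k0 then mu1 (nat (snd z))
      else if snd z \<ge> k0 then mu2 (nat (fst z))
      else mu0 (nat (fst z)) (nat (snd z)))"

definition kerZ0 :: "state pmf \<Rightarrow> kernel" where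
  "kerZ0 mu z = shift z mu"

definition kerZ1 :: "int \<Rightarrow> state pmf \<Rightarrow> (nat \<Rightarrow> state pmf) \<Rightarrow> kernel" where
  "kerZ1 k0 mu mu2 z = shift z (if fst z \<ge> k0 then mu else mu2 (nat (fst z)))"

definition kerZ2 :: "int \<Rightarrow> state pmf \<Rightarrow> (nat \<Rightarrow> state pmf) \<Rightarrow> kernel" where
  "kerZ2 k0 mu mu1 z = shift z (if snd z \<ge> k0 then mu else mu1 (nat (snd z)))"

definition irreducible_on :: "kernel \<Rightarrow> state set \<Rightarrow> bool" where
  "irreducible_on K S \<longleftrightarrow>
     (\<forall>x\<in>S. \<forall>y\<in>S. (x, y) \<in> {(u, v). u \<in> S \<and> v \<in> S \<and> pmf (K u) v > 0}\<^sup>*)"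

text \<open>hitA K k N t w: starting at state w at some time s >= 1, the probability
  that the first coordinate does not equal k at times s, ..., s+t-1, equals k at
  time s+t, and the second coordinate at time s+t has absolute value >= N.\<close>
fun hitA :: "kernel \<Rightarrow> int \<Rightarrow> nat \<Rightarrow> nat \<Rightarrow> state \<Rightarrow> ennreal" where
  "hitA K k N 0 w = (if fst w = k \<and> \<bar>snd w\<bar> \<ge> int N then 1 else 0)"
| "hitA K k N (Suc t) w = (if fst w = k then 0
      else \<integral>\<^sup>+ v. hitA K k N t v \<partial>measure_pmf (K w))"

text \<open>P_z(T(k) < infinity and |Y(T(k))| >= N) where T(k) = inf{n > 0 : X(n) = k};
  the term t of the series is the probability that T(k) = t + 1.\<close>
definition prob_hit_Y_ge :: "kernel \<Rightarrow> int \<Rightarrow> nat \<Rightarrow> state \<Rightarrow> ennreal" where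
  "prob_hit_Y_ge K k N z = (\<Sum>t. \<integral>\<^sup>+ w. hitA K k N t w \<partial>measure_pmf (K z))"

end

theory Submission
  imports Defs
begin

text \<open>Let \<open>T\<close> be the hitting time of \<open>k\<close> by the first coordinate \<open>X\<close> of \<open>Z\<^sub>1\<close>, and split at
  \<open>m \<approx> n / r\<close>. By (A2), \<open>phi Y = exp (g Y) + exp (- g Y)\<close> grows by at most a constant factor
  per step, so a Chernoff bound gives \<open>P(T \<le> m, \<bar>Y T\<bar> \<ge> n) \<le> 4 exp (- g n / 2)\<close> for \<open>r\<close> large.
  For \<open>T > m\<close>, Markov's inequality for \<open>l\<^sup>T\<close> with some \<open>l > 1\<close> reduces the claim to
  \<open>E\<^sub>x[l\<^sup>T] \<le> C exp (\<theta> x)\<close>.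

  \<open>X\<close> is itself a Markov chain which, above \<open>k0\<close>, is a random walk with drift \<open>m\<^sub>1 < 0\<close>; hence
  \<open>exp (\<alpha> x)\<close> is \<open>l\<close>-superharmonic off the finite set \<open>E = {0..<k0} \<union> {k}\<close> for small \<open>\<alpha>\<close> and
  \<open>l\<close> close to \<open>1\<close>. The returns to \<open>E\<close> form a substochastic matrix that is transient because
  \<open>k\<close> is reachable from everywhere (irreducibility of \<open>Z\<^sub>1\<close>), and transience survives the
  perturbation from \<open>l = 1\<close> to \<open>l\<close> slightly above \<open>1\<close>.\<close>

section \<open>Generating functions of hitting times\<close>

text \<open>\<open>hit_at K A f l t w\<close> is \<open>E\<^sub>w[l ^ \<tau> * f(X \<tau>); \<tau> = t]\<close> for the chain with kernel \<open>K\<close>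
  and the first time \<open>\<tau> \<ge> 0\<close> at which it is in \<open>A\<close>; \<open>hit_gf\<close> sums over \<open>t\<close>.\<close>
fun hit_at :: "('a \<Rightarrow> 'a pmf) \<Rightarrow> ('a \<Rightarrow> bool) \<Rightarrow> ('a \<Rightarrow> ennreal) \<Rightarrow> ennreal \<Rightarrow> nat \<Rightarrow> 'a \<Rightarrow> ennreal"
  where
    "hit_at K A f l 0 w = (if A w then f w else 0)"
  | "hit_at K A f l (Suc t) w = (if A w then 0 else l * (\<integral>\<^sup>+ v. hit_at K A f l t v \<partial>measure_pmf (K w)))"

definition hit_gf :: "('a \<Rightarrow> 'a pmf) \<Rightarrow> ('a \<Rightarrow> bool) \<Rightarrow> ('a \<Rightarrow> ennreal) \<Rightarrow> ennreal \<Rightarrow> 'a \<Rightarrow> ennreal"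
  where "hit_gf K A f l w = (\<Sum>t. hit_at K A f l t w)"

lemma hit_gf_unfold:
  "hit_gf K A f l w = (if A w then f w else l * (\<integral>\<^sup>+ v. hit_gf K A f l v \<partial>measure_pmf (K w)))"
proof -
  have "hit_gf K A f l w = (\<Sum>t. hit_at K A f l (Suc t) w) + hit_at K A f l 0 w"
    unfolding hit_gf_def using suminf_offset[of "\<lambda>t. hit_at K A f l t w" 1] by (simp add: summableI)
  moreover have "(\<Sum>t. \<integral>\<^sup>+ v. hit_at K A f l t v \<partial>measure_pmf (K w)) = (\<integral>\<^sup>+ v. hit_gf K A f l v \<partial>measure_pmf (K w))"
    unfolding hit_gf_def by (rule nn_integral_suminf[symmetric]) simp
  ultimately show ?thesis by auto
qed

lemma hit_gf_le_supersolution: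
  assumes closed: "\<And>w v. w \<in> D \<Longrightarrow> \<not> A w \<Longrightarrow> v \<in> set_pmf (K w) \<Longrightarrow> v \<in> D"
    and on_A: "\<And>w. w \<in> D \<Longrightarrow> A w \<Longrightarrow> f w \<le> V w"
    and super: "\<And>w. w \<in> D \<Longrightarrow> \<not> A w \<Longrightarrow> l * (\<integral>\<^sup>+ v. V v \<partial>measure_pmf (K w)) \<le> V w"
    and "w \<in> D"
  shows "hit_gf K A f l w \<le> V w"
proof -
  have "\<forall>w\<in>D. (\<Sum>t<T. hit_at K A f l t w) \<le> V w" for T
  proof (induction T)
    case (Suc T)
    show ?case
    proof
      fix w assume w: "w \<in> D"
      show "(\<Sum>t<Suc T. hit_at K A f l t w) \<le> V w"
      proof (cases "A w")
        case True
        then show ?thesis using on_A[OF w] by (simp add: sum.lessThan_Suc_shift del: sum.lessThan_Suc)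
      next
        case False
        have "(\<Sum>t<T. \<integral>\<^sup>+ v. hit_at K A f l t v \<partial>measure_pmf (K w))
            = (\<integral>\<^sup>+ v. (\<Sum>t<T. hit_at K A f l t v) \<partial>measure_pmf (K w))"
          by (rule nn_integral_sum[symmetric]) simp
        also have "\<dots> \<le> (\<integral>\<^sup>+ v. V v \<partial>measure_pmf (K w))"
          using Suc.IH closed[OF w False] by (intro nn_integral_mono_AE) (auto simp: AE_measure_pmf_iff)
        finally have "l * (\<Sum>t<T. \<integral>\<^sup>+ v. hit_at K A f l t v \<partial>measure_pmf (K w)) \<le> V w"
          using super[OF w False] by (meson mult_left_mono order_trans zero_le)
        then show ?thesis
          using False by (simp add: sum.lessThan_Suc_shift sum_distrib_left del: sum.lessThan_Suc)
      qed
    qed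
  qed simp
  then show ?thesis unfolding hit_gf_def suminf_eq_SUP using \<open>w \<in> D\<close> by (auto intro: SUP_least)
qed

lemma hit_at_scale: "hit_at K A f l t w = l ^ t * hit_at K A f 1 t w"
proof (induction t arbitrary: w)
  case (Suc t)
  have "(\<integral>\<^sup>+ v. hit_at K A f l t v \<partial>measure_pmf (K w)) = l ^ t * (\<integral>\<^sup>+ v. hit_at K A f 1 t v \<partial>measure_pmf (K w))"
    by (simp add: Suc.IH nn_integral_cmult)
  then show ?case by (simp add: mult.assoc)
qed simp

lemma nn_integral_hit_gf_series:
  assumes "l \<ge> 0"
  shows "(\<integral>\<^sup>+ v. hit_gf K A f (ennreal l) v \<partial>measure_pmf M)
       = (\<Sum>t. ennreal (l ^ t) * (\<integral>\<^sup>+ v. hit_at K A f 1 t v \<partial>measure_pmf M))"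
proof -
  have "(\<integral>\<^sup>+ v. hit_gf K A f (ennreal l) v \<partial>measure_pmf M)
      = (\<Sum>t. \<integral>\<^sup>+ v. ennreal l ^ t * hit_at K A f 1 t v \<partial>measure_pmf M)"
    unfolding hit_gf_def hit_at_scale[of K A f "ennreal l"] by (simp add: nn_integral_suminf)
  then show ?thesis using assms by (simp add: nn_integral_cmult ennreal_power)
qed

lemma hit_gf_sum:
  assumes "finite E"
  shows "hit_gf K A (\<lambda>w. \<Sum>e\<in>E. F e w) l w = (\<Sum>e\<in>E. hit_gf K A (F e) l w)"
proof -
  have "hit_at K A (\<lambda>w. \<Sum>e\<in>E. F e w) l t w = (\<Sum>e\<in>E. hit_at K A (F e) l t w)" for t
  proof (induction t arbitrary: w)
    case (Suc t)
    have "(\<integral>\<^sup>+ v. hit_at K A (\<lambda>w. \<Sum>e\<in>E. F e w) l t v \<partial>measure_pmf (K w))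
        = (\<Sum>e\<in>E. \<integral>\<^sup>+ v. hit_at K A (F e) l t v \<partial>measure_pmf (K w))"
      unfolding Suc.IH by (rule nn_integral_sum) simp
    then show ?case by (simp add: sum_distrib_left)
  qed simp
  then show ?thesis unfolding hit_gf_def using assms by (simp add: suminf_sum summableI)
qed

lemma hit_at_mono: "(\<And>w. f w \<le> f' w) \<Longrightarrow> hit_at K A f l t w \<le> hit_at K A f' l t w"
  by (induction t arbitrary: w) (auto intro!: mult_left_mono nn_integral_mono)

lemma hit_at_lumped:
  assumes "\<And>w. map_pmf p (K w) = Q (p w)"
  shows "hit_at K (\<lambda>w. A (p w)) (\<lambda>w. f (p w)) l t w = hit_at Q A f l t (p w)"
proof (induction t arbitrary: w)
  case (Suc t)
  have "(\<integral>\<^sup>+ v. hit_at K (\<lambda>w. A (p w)) (\<lambda>w. f (p w)) l t v \<partial>measure_pmf (K w))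
      = (\<integral>\<^sup>+ v. hit_at Q A f l t (p v) \<partial>measure_pmf (K w))"
    by (simp add: Suc.IH)
  also have "\<dots> = (\<integral>\<^sup>+ x. hit_at Q A f l t x \<partial>measure_pmf (Q (p w)))"
    by (simp flip: assms)
  finally show ?case by simp
qed simp

lemma hit_at_le_geometric:
  assumes on_A: "\<And>w. A w \<Longrightarrow> f w \<le> V w"
    and growth: "\<And>w. (\<integral>\<^sup>+ v. V v \<partial>measure_pmf (K w)) \<le> C * V w"
  shows "hit_at K A f 1 t w \<le> C ^ t * V w"
proof (induction t arbitrary: w)
  case 0
  then show ?case using on_A by simp
next
  case (Suc t)
  have "(\<integral>\<^sup>+ v. hit_at K A f 1 t v \<partial>measure_pmf (K w)) \<le> (\<integral>\<^sup>+ v. C ^ t * V v \<partial>measure_pmf (K w))"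
    by (intro nn_integral_mono Suc.IH)
  also have "\<dots> \<le> C ^ t * (C * V w)"
    by (simp add: nn_integral_cmult growth mult_left_mono)
  finally show ?case by (simp add: mult_ac)
qed

lemma hit_gf_pos:
  assumes "(x, y) \<in> {(u, v). v \<in> set_pmf (K u)}\<^sup>*" and "A y" and pos: "\<And>z. A z \<Longrightarrow> f z > 0"
  shows "hit_gf K A f 1 x > 0"
  using assms(1)
proof (induction rule: converse_rtrancl_induct)
  case base
  then show ?case using assms(2) pos by (subst hit_gf_unfold) simp
next
  case (step u v)
  have "0 < ennreal (pmf (K u) v) * hit_gf K A f 1 v"
    using step by (simp add: ennreal_zero_less_mult_iff set_pmf_iff)
  also have "\<dots> = (\<integral>\<^sup>+ z. hit_gf K A f 1 v * indicator {v} z \<partial>measure_pmf (K u))"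
    by (subst nn_integral_cmult_indicator) (simp_all add: emeasure_pmf_single mult.commute)
  also have "\<dots> \<le> (\<integral>\<^sup>+ z. hit_gf K A f 1 z \<partial>measure_pmf (K u))"
    by (intro nn_integral_mono) (simp split: split_indicator)
  finally show ?case using pos by (subst hit_gf_unfold) simp
qed

section \<open>Transient substochastic matrices\<close>

text \<open>\<open>M\<close> is a substochastic matrix on a finite set \<open>B\<close> of transient states and \<open>a x\<close> the
  probability of being absorbed in one step from \<open>x\<close>; \<open>absorb_within\<close> and \<open>stay_within\<close>
  are the probabilities of absorption within \<open>j\<close> steps and of staying in \<open>B\<close> for \<open>j\<close> steps.\<close>
fun absorb_within :: "('i \<Rightarrow> 'i \<Rightarrow> real) \<Rightarrow> ('i \<Rightarrow> real) \<Rightarrow> 'i set \<Rightarrow> nat \<Rightarrow> 'i \<Rightarrow> real" where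
    "absorb_within M a B 0 x = 0"
  | "absorb_within M a B (Suc j) x = a x + (\<Sum>e\<in>B. M x e * absorb_within M a B j e)"

fun stay_within :: "('i \<Rightarrow> 'i \<Rightarrow> real) \<Rightarrow> 'i set \<Rightarrow> nat \<Rightarrow> 'i \<Rightarrow> real" where
    "stay_within M B 0 x = 1"
  | "stay_within M B (Suc j) x = (\<Sum>e\<in>B. M x e * stay_within M B j e)"

lemma stay_within_nonneg:
  assumes "\<And>x e. x \<in> B \<Longrightarrow> e \<in> B \<Longrightarrow> 0 \<le> M x e" and "x \<in> B"
  shows "0 \<le> stay_within M B j x"
  using assms(2) by (induction j arbitrary: x) (auto intro!: sum_nonneg mult_nonneg_nonneg assms(1))

text \<open>The series \<open>\<Sum>\<^sub>j stay_within M B j\<close> is a supersolution once a power of \<open>M\<close> has row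
  sums uniformly below \<open>1\<close>.\<close>
lemma supersolution_from_stay_within:
  assumes M: "\<And>x e. x \<in> B \<Longrightarrow> e \<in> B \<Longrightarrow> 0 \<le> M x e"
    and q: "q > 0" and stay: "\<And>x. x \<in> B \<Longrightarrow> stay_within M B J x \<le> 1 - q"
    and A: "0 \<le> A" and a: "\<And>x. x \<in> B \<Longrightarrow> a x \<le> A"
  shows "\<exists>v. (\<forall>x\<in>B. 0 \<le> v x) \<and> (\<forall>x\<in>B. (\<Sum>e\<in>B. M x e * v e) + a x \<le> v x)"
proof (intro exI conjI ballI)
  define v where "v x = A / q * (\<Sum>j<J. stay_within M B j x)" for x
  fix x assume x: "x \<in> B"
  have "0 \<le> (\<Sum>j<J. stay_within M B j x)"
    using stay_within_nonneg[of B M, OF M x] by (simp add: sum_nonneg)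
  then show "0 \<le> v x"
    unfolding v_def using A q by simp
  have "(\<Sum>e\<in>B. M x e * v e) = A / q * (\<Sum>j<J. stay_within M B (Suc j) x)"
    unfolding v_def by (simp add: sum_distrib_left sum.swap[of _ B] mult_ac)
  also have "(\<Sum>j<J. stay_within M B (Suc j) x) = (\<Sum>j<J. stay_within M B j x) + stay_within M B J x - 1"
    using sum.lessThan_Suc_shift[of "\<lambda>j. stay_within M B j x" J] by simp
  also have "A / q * \<dots> \<le> A / q * ((\<Sum>j<J. stay_within M B j x) - q)"
    using stay[OF x] A q by (intro mult_left_mono) auto
  also have "\<dots> = v x - A"
    unfolding v_def using q by (simp add: field_simps)
  finally show "(\<Sum>e\<in>B. M x e * v e) + a x \<le> v x"
    using a[OF x] by linarith
qed

locale substochastic =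
  fixes B :: "'i set" and M :: "'i \<Rightarrow> 'i \<Rightarrow> real" and a :: "'i \<Rightarrow> real"
  assumes finite_B: "finite B"
    and M_nonneg: "\<And>x e. x \<in> B \<Longrightarrow> e \<in> B \<Longrightarrow> 0 \<le> M x e"
    and a_nonneg: "\<And>x. x \<in> B \<Longrightarrow> 0 \<le> a x"
    and row_sum_le_1: "\<And>x. x \<in> B \<Longrightarrow> (\<Sum>e\<in>B. M x e) + a x \<le> 1"
begin

lemma absorb_within_nonneg: "x \<in> B \<Longrightarrow> 0 \<le> absorb_within M a B j x"
  by (induction j arbitrary: x) (auto intro!: add_nonneg_nonneg sum_nonneg mult_nonneg_nonneg M_nonneg a_nonneg)

lemma absorb_within_Suc: "x \<in> B \<Longrightarrow> absorb_within M a B j x \<le> absorb_within M a B (Suc j) x"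
proof (induction j arbitrary: x)
  case 0
  then show ?case by (simp add: a_nonneg)
next
  case (Suc j)
  have "(\<Sum>e\<in>B. M x e * absorb_within M a B j e) \<le> (\<Sum>e\<in>B. M x e * absorb_within M a B (Suc j) e)"
    by (intro sum_mono mult_left_mono Suc.IH M_nonneg Suc.prems)
  then show ?case by simp
qed

lemma absorb_within_mono: "x \<in> B \<Longrightarrow> j \<le> j' \<Longrightarrow> absorb_within M a B j x \<le> absorb_within M a B j' x"
  using lift_Suc_mono_le[of "\<lambda>j. absorb_within M a B j x"] absorb_within_Suc by blast

lemma stay_plus_absorb_le_1: "x \<in> B \<Longrightarrow> stay_within M B j x + absorb_within M a B j x \<le> 1"
proof (induction j arbitrary: x)
  case (Suc j)
  have "stay_within M B (Suc j) x + absorb_within M a B (Suc j) x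
      = (\<Sum>e\<in>B. M x e * (stay_within M B j e + absorb_within M a B j e)) + a x"
    by (simp add: distrib_left sum.distrib)
  also have "\<dots> \<le> (\<Sum>e\<in>B. M x e * 1) + a x"
    using Suc.IH by (intro add_mono sum_mono mult_left_mono M_nonneg Suc.prems) auto
  also have "\<dots> \<le> 1" using row_sum_le_1[OF Suc.prems] by simp
  finally show ?case .
qed simp

lemma uniformly_transient:
  assumes reach: "\<And>x. x \<in> B \<Longrightarrow> \<exists>j. absorb_within M a B j x > 0"
  obtains J p where "0 < p" "\<And>x. x \<in> B \<Longrightarrow> stay_within M B J x \<le> 1 - p"
proof (cases "B = {}")
  case True
  then show ?thesis using that[of 1] by simp
next
  case False
  obtain jx where jx: "\<And>x. x \<in> B \<Longrightarrow> absorb_within M a B (jx x) x > 0" using reach by metis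
  define J where "J = Max (jx ` B)"
  have absorb_J: "absorb_within M a B J x > 0" if "x \<in> B" for x
  proof -
    have "jx x \<le> J" unfolding J_def using finite_B that by simp
    then show ?thesis using jx[OF that] absorb_within_mono[OF that] by (meson order_less_le_trans)
  qed
  define p where "p = Min ((\<lambda>x. absorb_within M a B J x) ` B)"
  have "0 < p" unfolding p_def using finite_B False absorb_J by auto
  moreover have "stay_within M B J x \<le> 1 - p" if "x \<in> B" for x
  proof -
    have "p \<le> absorb_within M a B J x" unfolding p_def using finite_B that by simp
    then show ?thesis using stay_plus_absorb_le_1[OF that, of J] by linarith
  qed
  ultimately show ?thesis by (rule that)
qed

lemma stay_within_perturbed:
  assumes \<eta>: "0 \<le> \<eta>" "\<eta> \<le> 1" and K0: "0 \<le> K0"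
    and M': "\<And>x e. x \<in> B \<Longrightarrow> e \<in> B \<Longrightarrow> 0 \<le> M' x e \<and> M' x e \<le> M x e + \<eta> * K0"
    and "x \<in> B"
  shows "stay_within M' B j x \<le> stay_within M B j x + \<eta> * (1 + 2 * real (card B) * K0) ^ j"
  using \<open>x \<in> B\<close>
proof (induction j arbitrary: x)
  case 0
  then show ?case using \<eta> by simp
next
  case (Suc j)
  define R where "R = 1 + 2 * real (card B) * K0"
  have Rj: "1 \<le> R ^ j" unfolding R_def using K0 by (simp add: one_le_power)
  have term_le: "M' x e * stay_within M' B j e
      \<le> M x e * stay_within M B j e + M x e * (\<eta> * R ^ j) + \<eta> * K0 * (2 * R ^ j)" if e: "e \<in> B" for e
  proof -
    have stay_e: "0 \<le> stay_within M B j e" "stay_within M B j e \<le> 1"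
      using stay_within_nonneg[of B M, OF M_nonneg e] stay_plus_absorb_le_1[OF e, of j]
        absorb_within_nonneg[OF e, of j] by auto
    have "M' x e * stay_within M' B j e \<le> (M x e + \<eta> * K0) * (stay_within M B j e + \<eta> * R ^ j)"
      using M'[OF Suc.prems e] Suc.IH[OF e] stay_within_nonneg[of B M', OF _ e, of j] M'
      unfolding R_def by (intro mult_mono) auto
    also have "\<dots> = M x e * stay_within M B j e + M x e * (\<eta> * R ^ j)
        + \<eta> * K0 * (stay_within M B j e + \<eta> * R ^ j)"
      by (simp add: algebra_simps)
    also have "\<eta> * K0 * (stay_within M B j e + \<eta> * R ^ j) \<le> \<eta> * K0 * (2 * R ^ j)"
    proof -
      have "\<eta> * R ^ j \<le> R ^ j" using \<eta> Rj by (simp add: mult_left_le_one_le)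
      then have "stay_within M B j e + \<eta> * R ^ j \<le> 2 * R ^ j" using stay_e Rj by linarith
      then show ?thesis using \<eta> K0 by (intro mult_left_mono) auto
    qed
    finally show ?thesis by simp
  qed
  have "stay_within M' B (Suc j) x
      \<le> stay_within M B (Suc j) x + (\<Sum>e\<in>B. M x e) * (\<eta> * R ^ j) + real (card B) * (\<eta> * K0 * (2 * R ^ j))"
    using sum_mono[OF term_le] by (simp add: sum.distrib sum_distrib_right)
  also have "(\<Sum>e\<in>B. M x e) * (\<eta> * R ^ j) \<le> 1 * (\<eta> * R ^ j)"
    using row_sum_le_1[OF Suc.prems] a_nonneg[OF Suc.prems] \<eta> Rj by (intro mult_right_mono) auto
  finally show ?case unfolding R_def by (simp add: algebra_simps)
qed

lemma perturbed_supersolution: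
  assumes reach: "\<And>x. x \<in> B \<Longrightarrow> \<exists>j. absorb_within M a B j x > 0" and K0: "0 \<le> K0"
  obtains \<eta>0 where "0 < \<eta>0"
    and "\<And>\<eta> M' a'. 0 \<le> \<eta> \<Longrightarrow> \<eta> \<le> \<eta>0
      \<Longrightarrow> (\<And>x e. x \<in> B \<Longrightarrow> e \<in> B \<Longrightarrow> 0 \<le> M' x e \<and> M' x e \<le> M x e + \<eta> * K0)
      \<Longrightarrow> (\<And>x. x \<in> B \<Longrightarrow> a' x \<le> a x + \<eta> * K0)
      \<Longrightarrow> \<exists>v. (\<forall>x\<in>B. 0 \<le> v x) \<and> (\<forall>x\<in>B. (\<Sum>e\<in>B. M' x e * v e) + a' x \<le> v x)"
proof -
  obtain J p where p: "0 < p" and stay: "\<And>x. x \<in> B \<Longrightarrow> stay_within M B J x \<le> 1 - p"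
    using uniformly_transient[OF reach] by blast
  define R where "R = 1 + 2 * real (card B) * K0"
  have RJ: "1 \<le> R ^ J" unfolding R_def using K0 by (simp add: one_le_power)
  define \<eta>0 where "\<eta>0 = min 1 (p / (2 * R ^ J))"
  have "0 < \<eta>0" unfolding \<eta>0_def using p RJ by simp
  moreover have "\<exists>v. (\<forall>x\<in>B. 0 \<le> v x) \<and> (\<forall>x\<in>B. (\<Sum>e\<in>B. M' x e * v e) + a' x \<le> v x)"
    if \<eta>: "0 \<le> \<eta>" "\<eta> \<le> \<eta>0"
      and M': "\<And>x e. x \<in> B \<Longrightarrow> e \<in> B \<Longrightarrow> 0 \<le> M' x e \<and> M' x e \<le> M x e + \<eta> * K0"
      and a': "\<And>x. x \<in> B \<Longrightarrow> a' x \<le> a x + \<eta> * K0" for \<eta> M' a'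
  proof (rule supersolution_from_stay_within)
    show "0 \<le> M' x e" if "x \<in> B" "e \<in> B" for x e using M'[OF that] by simp
    have "\<eta> * R ^ J \<le> p / (2 * R ^ J) * R ^ J"
      using \<eta> RJ unfolding \<eta>0_def by (intro mult_right_mono) auto
    also have "p / (2 * R ^ J) * R ^ J = p / 2"
      using RJ by (simp add: field_simps del: power_eq_0_iff)
    finally have "\<eta> * R ^ J \<le> p / 2" .
    then show "stay_within M' B J x \<le> 1 - p / 2" if "x \<in> B" for x
      using stay_within_perturbed[OF \<eta>(1) _ K0 M' that, of J] stay[OF that] \<eta> 
      unfolding \<eta>0_def R_def by simp
    show "a' x \<le> 1 + K0" if "x \<in> B" for x
    proof -
      have "0 \<le> (\<Sum>e\<in>B. M x e)" using M_nonneg[OF that] by (simp add: sum_nonneg)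
      then have "a x \<le> 1" using row_sum_le_1[OF that] by linarith
      moreover have "\<eta> * K0 \<le> K0" using \<eta> K0 unfolding \<eta>0_def by (simp add: mult_left_le_one_le)
      ultimately show ?thesis using a'[OF that] by linarith
    qed
  qed (use p K0 in auto)
  ultimately show ?thesis by (rule that)
qed

end

lemma sq_mult_exp_le:
  fixes a d :: real
  assumes "0 \<le> a" "0 < d"
  shows "a\<^sup>2 * exp (d * a / 2) \<le> 8 / d\<^sup>2 * exp (d * a)"
proof -
  have "0 \<le> d * a / 2" using assms by simp
  then have "(d * a / 2)\<^sup>2 \<le> 2 * exp (d * a / 2)"
    using exp_lower_Taylor_quadratic[of "d * a / 2"] by linarith
  then have "a\<^sup>2 \<le> 8 / d\<^sup>2 * exp (d * a / 2)"
    using assms by (simp add: power_mult_distrib power_divide field_simps)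
  then have "a\<^sup>2 * exp (d * a / 2) \<le> 8 / d\<^sup>2 * exp (d * a / 2) * exp (d * a / 2)"
    by (rule mult_right_mono) simp
  also have "\<dots> = 8 / d\<^sup>2 * exp (d * a)"
    by (simp add: mult.assoc flip: exp_add)
  finally show ?thesis .
qed

text \<open>The remainder is shaped to be integrable whenever \<open>exp (d a)\<close> is.\<close>
lemma exp_le_second_order:
  fixes \<alpha> d a k :: real
  assumes "0 \<le> \<alpha>" "\<alpha> \<le> d / 2" "0 < d" "- k \<le> a" "0 \<le> k"
  shows "exp (\<alpha> * a) \<le> 1 + \<alpha> * a + \<alpha>\<^sup>2 * (4 / d\<^sup>2 * exp (d * a) + k\<^sup>2 * exp (d * k))"
proof -
  obtain t where t: "\<bar>t\<bar> \<le> \<bar>\<alpha> * a\<bar>"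
    and taylor: "exp (\<alpha> * a) = (\<Sum>m<2. (\<alpha> * a) ^ m / fact m) + exp t / fact 2 * (\<alpha> * a) ^ 2"
    using Maclaurin_exp_le[of "\<alpha> * a" 2] by blast
  have "exp t / 2 * a\<^sup>2 \<le> 4 / d\<^sup>2 * exp (d * a) + k\<^sup>2 * exp (d * k)"
  proof (cases "0 \<le> a")
    case True
    have "t \<le> d * a / 2"
      using t True assms mult_right_mono[OF \<open>\<alpha> \<le> d / 2\<close> True] by (simp add: abs_mult)
    then have "exp t * a\<^sup>2 \<le> exp (d * a / 2) * a\<^sup>2" by (simp add: mult_right_mono)
    then have "exp t / 2 * a\<^sup>2 \<le> a\<^sup>2 * exp (d * a / 2) / 2" by (simp add: mult.commute)
    also have "\<dots> \<le> 4 / d\<^sup>2 * exp (d * a)" using sq_mult_exp_le[OF True \<open>0 < d\<close>] by simp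
    finally show ?thesis by (simp add: add_increasing2)
  next
    case False
    have "\<alpha> * (- a) \<le> d * k"
      using False assms by (intro mult_mono) auto
    then have "\<bar>\<alpha> * a\<bar> \<le> d * k"
      using False assms by (simp add: abs_mult)
    then have "exp t \<le> exp (d * k)" using t by simp
    moreover have "(- a)\<^sup>2 \<le> k\<^sup>2" using False assms by (intro power_mono) auto
    ultimately have "exp t * a\<^sup>2 \<le> exp (d * k) * k\<^sup>2"
      by (intro mult_mono) auto
    moreover have "0 \<le> exp t * a\<^sup>2" "exp t / 2 * a\<^sup>2 = exp t * a\<^sup>2 / 2" by simp_all
    ultimately have "exp t / 2 * a\<^sup>2 \<le> k\<^sup>2 * exp (d * k)"
      by (simp only: mult.commute[of "k\<^sup>2"])
    then show ?thesis by (simp add: add_increasing)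
  qed
  then have "\<alpha>\<^sup>2 * (exp t / 2 * a\<^sup>2) \<le> \<alpha>\<^sup>2 * (4 / d\<^sup>2 * exp (d * a) + k\<^sup>2 * exp (d * k))"
    by (rule mult_left_mono) simp
  moreover have "exp (\<alpha> * a) = 1 + \<alpha> * a + \<alpha>\<^sup>2 * (exp t / 2 * a\<^sup>2)"
    using taylor by (simp add: numeral_2_eq_2 power_mult_distrib)
  ultimately show ?thesis by simp
qed

lemma power_le_1_plus_interpolation:
  fixes l l0 :: real
  assumes "1 \<le> l" "l \<le> l0" "1 < l0"
  shows "l ^ n \<le> 1 + (l - 1) / (l0 - 1) * l0 ^ n"
proof -
  have "l ^ n - 1 = (l - 1) * (\<Sum>i<n. l ^ i)" by (rule power_diff_1_eq)
  also have "\<dots> \<le> (l - 1) * (\<Sum>i<n. l0 ^ i)"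
    using assms by (intro mult_left_mono sum_mono power_mono) auto
  also have "(\<Sum>i<n. l0 ^ i) = (l0 ^ n - 1) / (l0 - 1)"
    using power_diff_1_eq[of l0 n] assms by (simp add: field_simps)
  also have "(l - 1) * ((l0 ^ n - 1) / (l0 - 1)) = (l - 1) / (l0 - 1) * (l0 ^ n - 1)" by simp
  also have "\<dots> \<le> (l - 1) / (l0 - 1) * l0 ^ n" using assms by (intro mult_left_mono) auto
  finally show ?thesis by simp
qed

lemma sum_power_Suc_le: "(2::real) \<le> C \<Longrightarrow> (\<Sum>t<m. C ^ Suc t) \<le> 2 * C ^ m"
proof (induction m)
  case (Suc m)
  have "(\<Sum>t<Suc m. C ^ Suc t) = (\<Sum>t<m. C ^ Suc t) + C ^ Suc m" by simp
  also have "\<dots> \<le> 2 * C ^ m + C ^ Suc m" using Suc by simp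
  also have "2 * C ^ m \<le> C ^ Suc m" using Suc.prems by (simp add: mult_right_mono)
  finally show ?case by simp
qed simp

lemma inverse_power_le_exp:
  fixes l \<delta> x :: real
  assumes "1 < l" "\<delta> * x \<le> real (Suc m) * ln l"
  shows "1 / l ^ m \<le> l * exp (- \<delta> * x)"
proof -
  have "exp (real (Suc m) * ln l) = l ^ Suc m"
    using exp_of_nat_mult[of "Suc m" "ln l"] assms by simp
  then have "exp (\<delta> * x) \<le> l ^ Suc m" using assms by (metis exp_le_cancel_iff)
  then show ?thesis using assms by (simp add: exp_minus field_simps)
qed

lemma weighted_suminf_shift_le:
  fixes b :: "nat \<Rightarrow> ennreal" and l :: real
  assumes "1 \<le> l"
  shows "ennreal (l ^ m) * (\<Sum>t. b (t + m)) \<le> (\<Sum>t. ennreal (l ^ t) * b t)"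
proof -
  have "ennreal (l ^ m) * (\<Sum>t. b (t + m)) \<le> (\<Sum>t. ennreal (l ^ (t + m)) * b (t + m))"
    unfolding ennreal_suminf_cmult[symmetric] using assms
    by (intro suminf_le allI mult_right_mono ennreal_leI power_increasing) (auto simp: summableI)
  also have "\<dots> \<le> (\<Sum>t. ennreal (l ^ t) * b t)"
    using suminf_offset[of "\<lambda>t. ennreal (l ^ t) * b t" m] by (simp add: summableI add_increasing2)
  finally show ?thesis .
qed

section \<open>The chain \<open>Z\<^sub>1\<close> and its first coordinate\<close>

text \<open>Hypotheses (A1)--(A3) as far as they concern \<open>Z\<^sub>1\<close>; \<open>exp_moment\<close> is (A2) for the
  increment laws of \<open>Z\<^sub>1\<close>.\<close>
locale half_plane_walk =
  fixes k0 :: int and mu :: "(int \<times> int) pmf" and mu2 :: "nat \<Rightarrow> (int \<times> int) pmf"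
    and d g c :: real
  assumes k0: "1 \<le> k0"
    and mu_support: "\<And>a b. a < - k0 \<or> b < - k0 \<Longrightarrow> pmf mu (a, b) = 0"
    and mu2_support: "\<And>i a b. int i < k0 \<Longrightarrow> b < - k0 \<or> a < - int i \<Longrightarrow> pmf (mu2 i) (a, b) = 0"
    and d_pos: "0 < d" and g_pos: "0 < g" and c_pos: "0 < c"
    and exp_moment: "\<And>x. (\<integral>\<^sup>+ ab. ennreal (exp (d * real_of_int (fst ab) + g * real_of_int (snd ab)))
            \<partial>measure_pmf (if k0 \<le> x then mu else mu2 (nat x))) \<le> ennreal c"
    and irreducible: "irreducible_on (kerZ1 k0 mu mu2) {z. 0 \<le> fst z}"
    and drift_neg: "measure_pmf.expectation mu (\<lambda>w. real_of_int (fst w)) < 0"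
begin

abbreviation K :: "int \<times> int \<Rightarrow> (int \<times> int) pmf" where "K \<equiv> kerZ1 k0 mu mu2"

definition incr :: "int \<Rightarrow> (int \<times> int) pmf" where
  "incr x = (if k0 \<le> x then mu else mu2 (nat x))"

text \<open>The first coordinate of \<open>Z\<^sub>1\<close> is itself a Markov chain, with kernel \<open>kerX\<close>.\<close>
definition kerX :: "int \<Rightarrow> int pmf" where
  "kerX x = map_pmf (\<lambda>ab. x + fst ab) (incr x)"

lemma kerZ1_eq: "K w = map_pmf (\<lambda>ab. (fst w + fst ab, snd w + snd ab)) (incr (fst w))"
  unfolding kerZ1_def shift_def incr_def by (simp add: case_prod_unfold)

lemma map_fst_kerZ1: "map_pmf fst (K w) = kerX (fst w)"
  unfolding kerZ1_eq kerX_def by (simp add: pmf.map_comp o_def)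

lemma nn_integral_kerZ1:
  "(\<integral>\<^sup>+ v. F v \<partial>measure_pmf (K w)) = (\<integral>\<^sup>+ ab. F (fst w + fst ab, snd w + snd ab) \<partial>measure_pmf (incr (fst w)))"
  unfolding kerZ1_eq by simp

lemma nn_integral_kerX: "(\<integral>\<^sup>+ v. F v \<partial>measure_pmf (kerX x)) = (\<integral>\<^sup>+ ab. F (x + fst ab) \<partial>measure_pmf (incr x))"
  unfolding kerX_def by simp

lemma incr_support:
  assumes "ab \<in> set_pmf (incr x)"
  shows "- k0 \<le> fst ab" "- k0 \<le> snd ab" "0 \<le> x \<Longrightarrow> 0 \<le> x + fst ab"
proof -
  obtain a b where ab: "ab = (a, b)" by (cases ab)
  have pmf_pos: "pmf (incr x) (a, b) \<noteq> 0" using assms ab by (simp add: set_pmf_iff)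
  have "- k0 \<le> a \<and> - k0 \<le> b \<and> (0 \<le> x \<longrightarrow> 0 \<le> x + a)"
  proof (cases "k0 \<le> x")
    case True
    then have "\<not> (a < - k0 \<or> b < - k0)" using pmf_pos mu_support by (auto simp: incr_def)
    then show ?thesis using True by auto
  next
    case False
    then have "\<not> (b < - k0 \<or> a < - int (nat x))"
      using pmf_pos mu2_support[of "nat x"] k0 by (auto simp: incr_def)
    then show ?thesis using False k0 by (auto split: if_splits)
  qed
  then show "- k0 \<le> fst ab" "- k0 \<le> snd ab" "0 \<le> x \<Longrightarrow> 0 \<le> x + fst ab" using ab by auto
qed

lemma kerX_nonneg: "0 \<le> x \<Longrightarrow> v \<in> set_pmf (kerX x) \<Longrightarrow> 0 \<le> v"
  unfolding kerX_def using incr_support(3) by auto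

lemma kerX_mu: "k0 \<le> x \<Longrightarrow> kerX x = map_pmf (\<lambda>ab. x + fst ab) mu"
  unfolding kerX_def incr_def by simp

definition exp_fst_const :: real where
  "exp_fst_const = c * exp (g * k0) + 1"

lemma exp_fst_const_pos: "0 < exp_fst_const"
  unfolding exp_fst_const_def using c_pos by (simp add: add_pos_pos)

text \<open>Since the second increment is bounded below by \<open>-k0\<close>, the joint exponential moment
  controls each coordinate separately.\<close>
lemma incr_exp_fst_le:
  assumes "0 \<le> \<alpha>" "\<alpha> \<le> d"
  shows "(\<integral>\<^sup>+ ab. ennreal (exp (\<alpha> * real_of_int (fst ab))) \<partial>measure_pmf (incr x)) \<le> ennreal exp_fst_const"
proof -
  let ?E = "\<lambda>ab::int \<times> int. exp (d * real_of_int (fst ab) + g * real_of_int (snd ab))"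
  have "(\<integral>\<^sup>+ ab. ennreal (exp (\<alpha> * real_of_int (fst ab))) \<partial>measure_pmf (incr x))
     \<le> (\<integral>\<^sup>+ ab. ennreal (?E ab) * ennreal (exp (g * k0)) + 1 \<partial>measure_pmf (incr x))"
  proof (rule nn_integral_mono_AE, unfold AE_measure_pmf_iff, intro ballI)
    fix ab assume ab: "ab \<in> set_pmf (incr x)"
    have "0 \<le> g * (real_of_int (snd ab) + k0)"
      using incr_support(2)[OF ab] g_pos by simp
    then have "exp (d * real_of_int (fst ab)) \<le> ?E ab * exp (g * k0)"
      by (simp add: distrib_left flip: exp_add)
    moreover have "exp (\<alpha> * real_of_int (fst ab)) \<le> exp (d * real_of_int (fst ab)) + 1"
    proof (cases "0 \<le> fst ab")
      case True
      then have "\<alpha> * real_of_int (fst ab) \<le> d * real_of_int (fst ab)" using assms by (simp add: mult_right_mono)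
      then show ?thesis by (smt (verit) exp_gt_zero exp_le_cancel_iff)
    next
      case False
      then have "\<alpha> * real_of_int (fst ab) \<le> 0" using assms by (simp add: mult_nonneg_nonpos)
      then show ?thesis by (smt (verit) exp_gt_zero exp_le_one_iff)
    qed
    ultimately have "exp (\<alpha> * real_of_int (fst ab)) \<le> ?E ab * exp (g * k0) + 1" by linarith
    then have "ennreal (exp (\<alpha> * real_of_int (fst ab))) \<le> ennreal (?E ab * exp (g * k0) + 1)"
      by (rule ennreal_leI)
    then show "ennreal (exp (\<alpha> * real_of_int (fst ab))) \<le> ennreal (?E ab) * ennreal (exp (g * k0)) + 1"
      by (simp add: ennreal_mult'')
  qed
  also have "\<dots> = (\<integral>\<^sup>+ ab. ennreal (?E ab) \<partial>measure_pmf (incr x)) * ennreal (exp (g * k0)) + 1"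
    by (subst nn_integral_add) (auto simp: nn_integral_multc)
  also have "\<dots> \<le> ennreal c * ennreal (exp (g * k0)) + 1"
    using exp_moment[of x] unfolding incr_def by (intro add_mono mult_right_mono) auto
  also have "\<dots> = ennreal exp_fst_const"
    unfolding exp_fst_const_def using c_pos by (simp add: ennreal_mult ennreal_plus)
  finally show ?thesis .
qed

lemma incr_exp_snd_le:
  "(\<integral>\<^sup>+ ab. ennreal (exp (g * real_of_int (snd ab))) \<partial>measure_pmf (incr x)) \<le> ennreal (c * exp (d * k0))"
proof -
  let ?E = "\<lambda>ab::int \<times> int. exp (d * real_of_int (fst ab) + g * real_of_int (snd ab))"
  have "(\<integral>\<^sup>+ ab. ennreal (exp (g * real_of_int (snd ab))) \<partial>measure_pmf (incr x))
     \<le> (\<integral>\<^sup>+ ab. ennreal (?E ab) * ennreal (exp (d * k0)) \<partial>measure_pmf (incr x))"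
  proof (rule nn_integral_mono_AE, unfold AE_measure_pmf_iff, intro ballI)
    fix ab assume ab: "ab \<in> set_pmf (incr x)"
    have "0 \<le> d * (real_of_int (fst ab) + k0)"
      using incr_support(1)[OF ab] d_pos by simp
    then have "exp (g * real_of_int (snd ab)) \<le> ?E ab * exp (d * k0)"
      by (simp add: distrib_left flip: exp_add)
    then show "ennreal (exp (g * real_of_int (snd ab))) \<le> ennreal (?E ab) * ennreal (exp (d * k0))"
      by (simp flip: ennreal_mult'')
  qed
  also have "\<dots> = (\<integral>\<^sup>+ ab. ennreal (?E ab) \<partial>measure_pmf (incr x)) * ennreal (exp (d * k0))"
    by (simp add: nn_integral_multc)
  also have "\<dots> \<le> ennreal c * ennreal (exp (d * k0))"
    using exp_moment[of x] unfolding incr_def by (intro mult_right_mono) auto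
  also have "\<dots> = ennreal (c * exp (d * k0))" using c_pos by (simp add: ennreal_mult)
  finally show ?thesis .
qed

lemma incr_exp_neg_snd_le:
  "(\<integral>\<^sup>+ ab. ennreal (exp (- g * real_of_int (snd ab))) \<partial>measure_pmf (incr x)) \<le> ennreal (exp (g * k0))"
proof -
  have "(\<integral>\<^sup>+ ab. ennreal (exp (- g * real_of_int (snd ab))) \<partial>measure_pmf (incr x))
     \<le> (\<integral>\<^sup>+ ab. ennreal (exp (g * k0)) \<partial>measure_pmf (incr x))"
  proof (rule nn_integral_mono_AE, unfold AE_measure_pmf_iff, intro ballI)
    fix ab assume ab: "ab \<in> set_pmf (incr x)"
    have "0 \<le> g * (real_of_int (snd ab) + k0)"
      using incr_support(2)[OF ab] g_pos by simp
    then show "ennreal (exp (- g * real_of_int (snd ab))) \<le> ennreal (exp (g * k0))"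
      by (simp add: distrib_left)
  qed
  then show ?thesis by simp
qed

lemma kerX_exp_le:
  assumes "0 \<le> \<alpha>" "\<alpha> \<le> d"
  shows "(\<integral>\<^sup>+ v. ennreal (exp (\<alpha> * v)) \<partial>measure_pmf (kerX x)) \<le> ennreal (exp (\<alpha> * x) * exp_fst_const)"
proof -
  have "(\<integral>\<^sup>+ v. ennreal (exp (\<alpha> * v)) \<partial>measure_pmf (kerX x))
      = ennreal (exp (\<alpha> * x)) * (\<integral>\<^sup>+ ab. ennreal (exp (\<alpha> * real_of_int (fst ab))) \<partial>measure_pmf (incr x))"
    unfolding nn_integral_kerX by (simp add: distrib_left exp_add ennreal_mult'' nn_integral_cmult)
  also have "\<dots> \<le> ennreal (exp (\<alpha> * x)) * ennreal exp_fst_const"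
    using incr_exp_fst_le[OF assms] by (intro mult_left_mono) auto
  finally show ?thesis using exp_fst_const_pos by (simp add: ennreal_mult)
qed

lemma nn_integral_kerX_le_exp:
  fixes F :: "int \<Rightarrow> ennreal"
  assumes F: "\<And>y. 0 \<le> y \<Longrightarrow> F y \<le> ennreal (W * exp (\<alpha> * y))"
    and "0 \<le> W" "0 \<le> \<alpha>" "\<alpha> \<le> \<theta>" "\<alpha> \<le> d" "0 \<le> x"
  shows "(\<integral>\<^sup>+ v. F v \<partial>measure_pmf (kerX x)) \<le> ennreal (W * exp_fst_const * exp (\<theta> * x))"
proof -
  have "(\<integral>\<^sup>+ v. F v \<partial>measure_pmf (kerX x)) \<le> (\<integral>\<^sup>+ v. ennreal W * ennreal (exp (\<alpha> * v)) \<partial>measure_pmf (kerX x))"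
    using F kerX_nonneg[OF \<open>0 \<le> x\<close>] \<open>0 \<le> W\<close>
    by (intro nn_integral_mono_AE) (auto simp: AE_measure_pmf_iff ennreal_mult)
  also have "\<dots> \<le> ennreal W * ennreal (exp (\<alpha> * x) * exp_fst_const)"
    using kerX_exp_le[of \<alpha> x] assms by (auto simp: nn_integral_cmult intro: mult_left_mono)
  also have "\<dots> \<le> ennreal (W * exp_fst_const * exp (\<theta> * x))"
  proof -
    have "\<alpha> * x \<le> \<theta> * x" using assms by (intro mult_right_mono) auto
    then show ?thesis using \<open>0 \<le> W\<close> exp_fst_const_pos
      by (auto simp: ennreal_mult[symmetric] mult_ac intro!: ennreal_leI mult_left_mono)
  qed
  finally show ?thesis .
qed

definition m1 :: real where
  "m1 = measure_pmf.expectation mu (\<lambda>w. real_of_int (fst w))"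

definition remainder_const :: real where
  "remainder_const = 4 / d\<^sup>2 * exp_fst_const + (real_of_int k0)\<^sup>2 * exp (d * k0)"

definition alpha_drift :: real where
  "alpha_drift = min (d / 2) (min (- 1 / m1) (- m1 / (2 * remainder_const)))"

lemma m1_neg: "m1 < 0"
  using drift_neg unfolding m1_def .

lemma remainder_const_pos: "0 < remainder_const"
  unfolding remainder_const_def using exp_fst_const_pos d_pos by (intro add_pos_nonneg) auto

lemma alpha_drift_pos: "0 < alpha_drift"
  unfolding alpha_drift_def using d_pos m1_neg remainder_const_pos by (auto simp: divide_pos_neg divide_neg_pos)

lemma alpha_drift_le: "alpha_drift \<le> d"
  unfolding alpha_drift_def using d_pos by auto

lemma drift_factor_bounds:
  assumes "0 < \<alpha>" "\<alpha> \<le> alpha_drift"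
  shows "1 / 2 \<le> 1 + \<alpha> * m1 / 2" "1 + \<alpha> * m1 / 2 < 1"
proof -
  have "\<alpha> * (- m1) \<le> 1" using assms m1_neg unfolding alpha_drift_def by (simp add: field_simps)
  then show "1 / 2 \<le> 1 + \<alpha> * m1 / 2" by (simp add: algebra_simps)
  show "1 + \<alpha> * m1 / 2 < 1" using assms(1) m1_neg by (simp add: mult_pos_neg)
qed

lemma mu_fst_ge: "ab \<in> set_pmf mu \<Longrightarrow> - k0 \<le> fst ab"
  using incr_support(1)[of ab k0] by (simp add: incr_def)

lemma integrable_exp_fst: "integrable (measure_pmf mu) (\<lambda>ab. exp (d * real_of_int (fst ab)))"
proof (rule integrableI_bounded)
  have "(\<integral>\<^sup>+ ab. ennreal (exp (d * real_of_int (fst ab))) \<partial>measure_pmf mu) \<le> ennreal exp_fst_const"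
    using incr_exp_fst_le[of d k0] d_pos by (simp add: incr_def)
  then show "(\<integral>\<^sup>+ ab. ennreal (norm (exp (d * real_of_int (fst ab)))) \<partial>measure_pmf mu) < \<infinity>"
    using ennreal_less_top le_less_trans by fastforce
qed simp

lemma expectation_exp_fst_le: "measure_pmf.expectation mu (\<lambda>ab. exp (d * real_of_int (fst ab))) \<le> exp_fst_const"
proof -
  have "(\<integral>\<^sup>+ ab. ennreal (exp (d * real_of_int (fst ab))) \<partial>measure_pmf mu) \<le> ennreal exp_fst_const"
    using incr_exp_fst_le[of d k0] d_pos by (simp add: incr_def)
  then show ?thesis
    using nn_integral_eq_integral[OF integrable_exp_fst] exp_fst_const_pos by (simp add: ennreal_le_iff)
qed

lemma integrable_fst: "integrable (measure_pmf mu) (\<lambda>ab. real_of_int (fst ab))"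
proof (rule Bochner_Integration.integrable_bound[where f = "\<lambda>ab. real_of_int k0 + exp (d * real_of_int (fst ab)) / d"])
  show "integrable (measure_pmf mu) (\<lambda>ab. real_of_int k0 + exp (d * real_of_int (fst ab)) / d)"
    using integrable_exp_fst by simp
  show "AE ab in measure_pmf mu. norm (real_of_int (fst ab)) \<le> norm (real_of_int k0 + exp (d * real_of_int (fst ab)) / d)"
  proof (unfold AE_measure_pmf_iff, intro ballI)
    fix ab assume "ab \<in> set_pmf mu"
    then have "- k0 \<le> fst ab" by (rule mu_fst_ge)
    moreover have "d * real_of_int (fst ab) \<le> exp (d * real_of_int (fst ab))"
      using exp_ge_add_one_self[of "d * real_of_int (fst ab)"] by linarith
    then have "real_of_int (fst ab) \<le> exp (d * real_of_int (fst ab)) / d"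
      using d_pos by (simp add: field_simps)
    moreover have "0 \<le> exp (d * real_of_int (fst ab)) / d" using d_pos by simp
    ultimately show "norm (real_of_int (fst ab)) \<le> norm (real_of_int k0 + exp (d * real_of_int (fst ab)) / d)"
      using k0 by (auto simp: abs_if)
  qed
qed simp

lemma mu_exp_fst_le_drift:
  assumes "0 < \<alpha>" "\<alpha> \<le> alpha_drift"
  shows "(\<integral>\<^sup>+ ab. ennreal (exp (\<alpha> * real_of_int (fst ab))) \<partial>measure_pmf mu) \<le> ennreal (1 + \<alpha> * m1 / 2)"
proof -
  have \<alpha>: "\<alpha> \<le> d / 2" "\<alpha> * remainder_const \<le> - m1 / 2"
    using assms remainder_const_pos unfolding alpha_drift_def by (auto simp: field_simps)
  define Q where "Q ab = 4 / d\<^sup>2 * exp (d * real_of_int (fst ab)) + (real_of_int k0)\<^sup>2 * exp (d * k0)"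
    for ab :: "int \<times> int"
  define F where "F ab = 1 + \<alpha> * real_of_int (fst ab) + \<alpha>\<^sup>2 * Q ab" for ab
  have F_ge: "exp (\<alpha> * real_of_int (fst ab)) \<le> F ab" if "ab \<in> set_pmf mu" for ab
    unfolding F_def Q_def using exp_le_second_order[of \<alpha> d k0 "real_of_int (fst ab)"]
      mu_fst_ge[OF that] assms \<alpha> d_pos k0 by simp
  have int_Q: "integrable (measure_pmf mu) Q" unfolding Q_def using integrable_exp_fst by simp
  have int_F: "integrable (measure_pmf mu) F" unfolding F_def using integrable_fst int_Q by simp
  have "(\<integral>\<^sup>+ ab. ennreal (exp (\<alpha> * real_of_int (fst ab))) \<partial>measure_pmf mu) \<le> (\<integral>\<^sup>+ ab. ennreal (F ab) \<partial>measure_pmf mu)"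
    by (rule nn_integral_mono_AE) (auto simp: AE_measure_pmf_iff intro!: ennreal_leI F_ge)
  also have "\<dots> = ennreal (measure_pmf.expectation mu F)"
    by (rule nn_integral_eq_integral[OF int_F]) (auto simp: AE_measure_pmf_iff intro: order_trans[OF _ F_ge])
  also have "measure_pmf.expectation mu F = 1 + \<alpha> * m1 + \<alpha>\<^sup>2 * measure_pmf.expectation mu Q"
    unfolding F_def m1_def using integrable_fst int_Q by simp
  also have "\<dots> \<le> 1 + \<alpha> * m1 + \<alpha> * (\<alpha> * remainder_const)"
  proof -
    have "measure_pmf.expectation mu Q \<le> remainder_const"
      unfolding Q_def remainder_const_def using integrable_exp_fst expectation_exp_fst_le d_pos
      by (simp add: divide_right_mono)
    then have "\<alpha>\<^sup>2 * measure_pmf.expectation mu Q \<le> \<alpha>\<^sup>2 * remainder_const"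
      by (rule mult_left_mono) simp
    then show ?thesis by (simp add: power2_eq_square mult.assoc)
  qed
  also have "\<dots> \<le> 1 + \<alpha> * m1 / 2"
    using mult_left_mono[OF \<alpha>(2), of \<alpha>] assms by (simp add: field_simps)
  finally show ?thesis by (simp add: ennreal_leI)
qed

lemma kerX_reachable:
  assumes "0 \<le> x" "0 \<le> y"
  shows "(x, y) \<in> {(u, v). v \<in> set_pmf (kerX u)}\<^sup>*"
proof -
  let ?S = "{z::int \<times> int. 0 \<le> fst z}"
  have "((x, 0), (y, 0)) \<in> {(u, v). u \<in> ?S \<and> v \<in> ?S \<and> pmf (K u) v > 0}\<^sup>*"
    using irreducible assms unfolding irreducible_on_def by auto
  then have "(fst (x, 0::int), fst (y, 0::int)) \<in> {(u, v). v \<in> set_pmf (kerX u)}\<^sup>*"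
  proof (induction rule: rtrancl_induct)
    case (step b c)
    then have "fst c \<in> set_pmf (kerX (fst b))"
      by (auto simp flip: map_fst_kerZ1 simp: set_pmf_iff)
    with step.IH show ?case by (simp add: rtrancl.rtrancl_into_rtrancl)
  qed simp
  then show ?thesis by simp
qed

end

section \<open>The hitting time of \<open>k\<close> by the first coordinate\<close>

locale half_plane_walk_target = half_plane_walk +
  fixes k :: int
  assumes k_nonneg: "0 \<le> k"
begin

text \<open>Excursions of the first coordinate are cut at the finite set \<open>E\<close>: off \<open>E\<close> the chain
  moves like the walk \<open>\<mu>\<close>. With \<open>\<tau>\<^sub>E\<close> and \<open>\<tau>\<^sub>k\<close> the first times \<open>t \<ge> 0\<close> in \<open>E\<close> and at \<open>k\<close>:
  \<open>entry_gf l e x = E\<^sub>x[l ^ \<tau>\<^sub>E; X(\<tau>\<^sub>E) = e]\<close>, \<open>return_gf l x e\<close> is the same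
  quantity for the chain forced to make one step first, and \<open>target_gf l x = E\<^sub>x[l ^ \<tau>\<^sub>k]\<close>.\<close>
definition E :: "int set" where "E = {0..<k0} \<union> {k}"
definition B :: "int set" where "B = E - {k}"

definition entry_gf :: "ennreal \<Rightarrow> int \<Rightarrow> int \<Rightarrow> ennreal" where
  "entry_gf l e x = hit_gf kerX (\<lambda>x. x \<in> E) (\<lambda>x. if x = e then 1 else 0) l x"

definition return_gf :: "ennreal \<Rightarrow> int \<Rightarrow> int \<Rightarrow> ennreal" where
  "return_gf l x e = l * (\<integral>\<^sup>+ v. entry_gf l e v \<partial>measure_pmf (kerX x))"

definition target_gf :: "ennreal \<Rightarrow> int \<Rightarrow> ennreal" where
  "target_gf l x = hit_gf kerX (\<lambda>x. x = k) (\<lambda>_. 1) l x"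

lemma finite_E: "finite E" and finite_B: "finite B" and k_in_E: "k \<in> E" and k_notin_B: "k \<notin> B"
  and B_subset: "B \<subseteq> {0..<k0}" and E_eq: "E = insert k B" and B_subset_E: "B \<subseteq> E"
  and E_nonneg: "x \<in> E \<Longrightarrow> 0 \<le> x"
  unfolding E_def B_def using k_nonneg by auto

lemma notin_E: "0 \<le> x \<Longrightarrow> x \<notin> E \<Longrightarrow> k0 \<le> x \<and> x \<noteq> k"
  unfolding E_def by auto

lemma entry_gf_on_E: "x \<in> E \<Longrightarrow> entry_gf l e x = (if x = e then 1 else 0)"
  unfolding entry_gf_def by (subst hit_gf_unfold) simp

lemma sum_entry_gf_on_E:
  assumes "x \<in> E"
  shows "(\<Sum>e\<in>E. entry_gf l e x * w e) = w x"
proof -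
  have "(\<Sum>e\<in>E. entry_gf l e x * w e) = (\<Sum>e\<in>E. if x = e then w e else 0)"
    using entry_gf_on_E[OF assms] by (intro sum.cong) auto
  then show ?thesis using finite_E assms by simp
qed

lemma sum_entry_gf:
  "(\<Sum>e\<in>E. entry_gf l e x) = hit_gf kerX (\<lambda>x. x \<in> E) (\<lambda>x. \<Sum>e\<in>E. if x = e then 1 else 0) l x"
  unfolding entry_gf_def by (rule hit_gf_sum[OF finite_E, symmetric])

lemma sum_indicator_E: "x \<in> E \<Longrightarrow> (\<Sum>e\<in>E. (if x = e then 1 else 0 :: ennreal)) = 1"
  using finite_E by simp

text \<open>Off \<open>E\<close> the function \<open>exp (\<alpha> x)\<close> is \<open>l\<close>-superharmonic, by the drift bound.\<close>
lemma sum_entry_gf_le_exp: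
  assumes "0 < \<alpha>" "\<alpha> \<le> alpha_drift" "0 \<le> l" "l * (1 + \<alpha> * m1 / 2) \<le> 1" "0 \<le> x"
  shows "(\<Sum>e\<in>E. entry_gf (ennreal l) e x) \<le> ennreal (exp (\<alpha> * x))"
  unfolding sum_entry_gf
proof (rule hit_gf_le_supersolution[where D = "{x. 0 \<le> x}"])
  show "v \<in> {x. 0 \<le> x}" if "w \<in> {x. 0 \<le> x}" "v \<in> set_pmf (kerX w)" for w v
    using kerX_nonneg that by auto
  show "(\<Sum>e\<in>E. (if w = e then 1 else 0)) \<le> ennreal (exp (\<alpha> * w))" if "w \<in> E" for w
    using that assms E_nonneg[OF that] by (simp add: sum_indicator_E)
  show "ennreal l * (\<integral>\<^sup>+ v. ennreal (exp (\<alpha> * v)) \<partial>measure_pmf (kerX w)) \<le> ennreal (exp (\<alpha> * w))"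
    if "w \<in> {x. 0 \<le> x}" "w \<notin> E" for w
  proof -
    have "(\<integral>\<^sup>+ v. ennreal (exp (\<alpha> * v)) \<partial>measure_pmf (kerX w))
        = ennreal (exp (\<alpha> * w)) * (\<integral>\<^sup>+ ab. ennreal (exp (\<alpha> * real_of_int (fst ab))) \<partial>measure_pmf mu)"
      using notin_E that by (simp add: kerX_mu distrib_left exp_add ennreal_mult'' nn_integral_cmult)
    also have "\<dots> \<le> ennreal (exp (\<alpha> * w)) * ennreal (1 + \<alpha> * m1 / 2)"
      using mu_exp_fst_le_drift assms by (intro mult_left_mono) auto
    finally have "ennreal l * (\<integral>\<^sup>+ v. ennreal (exp (\<alpha> * v)) \<partial>measure_pmf (kerX w))
        \<le> ennreal l * (ennreal (exp (\<alpha> * w)) * ennreal (1 + \<alpha> * m1 / 2))"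
      by (rule mult_left_mono) simp
    also have "\<dots> = ennreal (exp (\<alpha> * w) * (l * (1 + \<alpha> * m1 / 2)))"
      using drift_factor_bounds(1)[OF assms(1,2)] assms(3) by (simp add: ennreal_mult[symmetric] mult_ac)
    also have "\<dots> \<le> ennreal (exp (\<alpha> * w))"
      using assms by (intro ennreal_leI) (simp add: mult_left_le)
    finally show ?thesis .
  qed
qed (use assms in auto)

lemma sum_entry_gf_1_le_1: "0 \<le> x \<Longrightarrow> (\<Sum>e\<in>E. entry_gf 1 e x) \<le> 1"
  unfolding sum_entry_gf
  by (rule hit_gf_le_supersolution[where D = "{x. 0 \<le> x}"]) (auto simp: sum_indicator_E kerX_nonneg)

lemma target_gf_le_entry_gf:
  assumes w_k: "1 \<le> w k" and super: "\<And>x. x \<in> B \<Longrightarrow> (\<Sum>e\<in>E. return_gf l x e * w e) \<le> w x"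
    and "0 \<le> x"
  shows "target_gf l x \<le> (\<Sum>e\<in>E. entry_gf l e x * w e)"
  unfolding target_gf_def
proof (rule hit_gf_le_supersolution[where D = "{x. 0 \<le> x}"])
  show "v \<in> {x. 0 \<le> x}" if "u \<in> {x. 0 \<le> x}" "v \<in> set_pmf (kerX u)" for u v
    using kerX_nonneg that by auto
  show "1 \<le> (\<Sum>e\<in>E. entry_gf l e u * w e)" if "u = k" for u
    using sum_entry_gf_on_E[OF k_in_E] w_k that by simp
  show "l * (\<integral>\<^sup>+ v. (\<Sum>e\<in>E. entry_gf l e v * w e) \<partial>measure_pmf (kerX u)) \<le> (\<Sum>e\<in>E. entry_gf l e u * w e)"
    if "u \<in> {x. 0 \<le> x}" "u \<noteq> k" for u
  proof -
    have "(\<integral>\<^sup>+ v. (\<Sum>e\<in>E. entry_gf l e v * w e) \<partial>measure_pmf (kerX u))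
        = (\<Sum>e\<in>E. (\<integral>\<^sup>+ v. entry_gf l e v \<partial>measure_pmf (kerX u)) * w e)"
      by (subst nn_integral_sum) (auto simp: nn_integral_multc)
    then have eq: "l * (\<integral>\<^sup>+ v. (\<Sum>e\<in>E. entry_gf l e v * w e) \<partial>measure_pmf (kerX u))
        = (\<Sum>e\<in>E. return_gf l u e * w e)"
      by (simp add: return_gf_def sum_distrib_left mult.assoc)
    show ?thesis
    proof (cases "u \<in> E")
      case True
      then have "u \<in> B" using that unfolding B_def by auto
      then show ?thesis using eq super sum_entry_gf_on_E[OF True] by simp
    next
      case False
      then have "return_gf l u e = entry_gf l e u" for e
        using hit_gf_unfold[of kerX "\<lambda>x. x \<in> E" "\<lambda>x. if x = e then 1 else 0" l u]
        unfolding return_gf_def entry_gf_def by simp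
      then show ?thesis using eq by simp
    qed
  qed
qed (use assms in auto)

lemma target_gf_1_pos: "0 \<le> x \<Longrightarrow> 0 < target_gf 1 x"
  unfolding target_gf_def using kerX_reachable k_nonneg by (intro hit_gf_pos) auto

lemma return_gf_series:
  assumes "0 \<le> l"
  shows "return_gf (ennreal l) x e
    = (\<Sum>t. ennreal (l ^ Suc t) * (\<integral>\<^sup>+ v. hit_at kerX (\<lambda>x. x \<in> E) (\<lambda>x. if x = e then 1 else 0) 1 t v \<partial>measure_pmf (kerX x)))"
  unfolding return_gf_def entry_gf_def nn_integral_hit_gf_series[OF assms]
  using assms by (simp add: ennreal_mult mult.assoc)

text \<open>Convexity of \<open>l \<mapsto> l\<^sup>n\<close> lets the return generating functions at \<open>l\<close> close to \<open>1\<close>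
  be compared with those at \<open>1\<close> and at a fixed \<open>l0 > 1\<close>.\<close>
lemma return_gf_interpolation:
  assumes "1 \<le> l" "l \<le> l0" "1 < l0"
  shows "return_gf (ennreal l) x e \<le> return_gf 1 x e + ennreal ((l - 1) / (l0 - 1)) * return_gf (ennreal l0) x e"
proof -
  define I where "I t = (\<integral>\<^sup>+ v. hit_at kerX (\<lambda>x. x \<in> E) (\<lambda>x. if x = e then 1 else 0) 1 t v \<partial>measure_pmf (kerX x))" for t
  define \<eta> where "\<eta> = (l - 1) / (l0 - 1)"
  have \<eta>: "0 \<le> \<eta>" unfolding \<eta>_def using assms by simp
  have "ennreal (l ^ Suc t) * I t \<le> I t + ennreal \<eta> * (ennreal (l0 ^ Suc t) * I t)" for t
  proof -
    have "ennreal (l ^ Suc t) \<le> ennreal (1 + \<eta> * l0 ^ Suc t)"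
      unfolding \<eta>_def by (intro ennreal_leI power_le_1_plus_interpolation assms)
    also have "\<dots> = 1 + ennreal \<eta> * ennreal (l0 ^ Suc t)"
      using \<eta> assms by (simp add: ennreal_mult ennreal_plus)
    finally have "ennreal (l ^ Suc t) * I t \<le> (1 + ennreal \<eta> * ennreal (l0 ^ Suc t)) * I t"
      by (rule mult_right_mono) simp
    then show ?thesis by (simp add: distrib_right mult.assoc)
  qed
  then have "(\<Sum>t. ennreal (l ^ Suc t) * I t) \<le> (\<Sum>t. I t + ennreal \<eta> * (ennreal (l0 ^ Suc t) * I t))"
    by (intro suminf_le) (auto simp: summableI)
  also have "\<dots> = (\<Sum>t. I t) + ennreal \<eta> * (\<Sum>t. ennreal (l0 ^ Suc t) * I t)"
    by (simp add: suminf_add[symmetric] summableI)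
  finally show ?thesis
    using return_gf_series[of 1] return_gf_series[of l] return_gf_series[of l0] assms
    unfolding I_def \<eta>_def by simp
qed

lemma sum_return_gf_1_le_1: "0 \<le> x \<Longrightarrow> (\<Sum>e\<in>E. return_gf 1 x e) \<le> 1"
proof -
  assume x: "0 \<le> x"
  have "(\<Sum>e\<in>E. return_gf 1 x e) = (\<integral>\<^sup>+ v. (\<Sum>e\<in>E. entry_gf 1 e v) \<partial>measure_pmf (kerX x))"
    unfolding return_gf_def by (subst nn_integral_sum) auto
  also have "\<dots> \<le> (\<integral>\<^sup>+ v. 1 \<partial>measure_pmf (kerX x))"
    by (rule nn_integral_mono_AE) (use sum_entry_gf_1_le_1 kerX_nonneg[OF x] in \<open>auto simp: AE_measure_pmf_iff\<close>)
  finally show ?thesis by simp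
qed

definition ret1 :: "int \<Rightarrow> int \<Rightarrow> real" where
  "ret1 x e = enn2real (return_gf 1 x e)"

lemma return_gf_1_eq: "0 \<le> x \<Longrightarrow> e \<in> E \<Longrightarrow> return_gf 1 x e = ennreal (ret1 x e)"
proof -
  assume "0 \<le> x" "e \<in> E"
  then have "return_gf 1 x e \<le> 1"
    using sum_return_gf_1_le_1 member_le_sum[of e E "return_gf 1 x"] finite_E by (meson order_trans zero_le)
  then have "return_gf 1 x e \<noteq> \<top>"
    using ennreal_one_neq_top top_unique by metis
  then show ?thesis
    unfolding ret1_def by (simp add: ennreal_enn2real_if)
qed

sublocale ret1: substochastic B ret1 "\<lambda>x. ret1 x k"
proof
  fix x assume x: "x \<in> B"
  then have "0 \<le> x" using B_subset by auto
  have "(\<Sum>e\<in>E. return_gf 1 x e) = return_gf 1 x k + (\<Sum>e\<in>B. return_gf 1 x e)"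
    unfolding E_eq using finite_B k_notin_B by simp
  also have "\<dots> = ennreal (ret1 x k) + (\<Sum>e\<in>B. ennreal (ret1 x e))"
    using return_gf_1_eq[OF \<open>0 \<le> x\<close>] k_in_E B_subset_E
    by (intro arg_cong2[where f = "(+)"] sum.cong) auto
  also have "\<dots> = ennreal ((\<Sum>e\<in>B. ret1 x e) + ret1 x k)"
    by (simp add: ret1_def sum_ennreal sum_nonneg ennreal_plus add.commute)
  finally show "(\<Sum>e\<in>B. ret1 x e) + ret1 x k \<le> 1"
    using sum_return_gf_1_le_1[OF \<open>0 \<le> x\<close>] ennreal_le_1 by simp
qed (simp_all add: finite_B ret1_def)

definition never_absorbed :: "int set" where
  "never_absorbed = {y \<in> B. \<forall>j. absorb_within ret1 (\<lambda>x. ret1 x k) B j y \<le> 0}"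

lemma never_absorbed_closed:
  assumes y: "y \<in> never_absorbed" and "e \<in> E"
  shows "ret1 y e = 0 \<or> e \<in> never_absorbed"
proof -
  let ?abs = "absorb_within ret1 (\<lambda>x. ret1 x k) B"
  have "y \<in> B" and never: "\<And>j. ?abs j y \<le> 0" using y unfolding never_absorbed_def by auto
  show ?thesis
  proof (cases "e = k")
    case True
    then show ?thesis using never[of "Suc 0"] ret1.a_nonneg[OF \<open>y \<in> B\<close>] by simp
  next
    case False
    then have "e \<in> B" using \<open>e \<in> E\<close> E_eq by auto
    show ?thesis
    proof (cases "e \<in> never_absorbed")
      case False
      then obtain j where pos: "0 < ?abs j e"
        using \<open>e \<in> B\<close> unfolding never_absorbed_def by (auto simp: not_le)
      have "ret1 y e * ?abs j e \<le> (\<Sum>e'\<in>B. ret1 y e' * ?abs j e')"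
        using \<open>e \<in> B\<close> \<open>y \<in> B\<close> finite_B
        by (intro member_le_sum) (auto intro!: mult_nonneg_nonneg ret1.M_nonneg ret1.absorb_within_nonneg)
      also have "\<dots> \<le> ?abs (Suc j) y" using ret1.a_nonneg[OF \<open>y \<in> B\<close>] by simp
      also have "\<dots> \<le> 0" by (rule never)
      finally show ?thesis
        using pos ret1.M_nonneg[OF \<open>y \<in> B\<close> \<open>e \<in> B\<close>] by (simp add: mult_le_0_iff)
    qed simp
  qed
qed

text \<open>Otherwise the indicator of the closed set \<open>never_absorbed\<close> would bound \<open>target_gf 1\<close>,
  which is positive by irreducibility.\<close>
lemma absorb_reachable: "x \<in> B \<Longrightarrow> \<exists>j. 0 < absorb_within ret1 (\<lambda>x. ret1 x k) B j x"
proof (rule ccontr)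
  assume x: "x \<in> B" and "\<not> (\<exists>j. 0 < absorb_within ret1 (\<lambda>x. ret1 x k) B j x)"
  then have "x \<in> never_absorbed" unfolding never_absorbed_def by (auto simp: not_less)
  define w where "w e = (if e \<in> never_absorbed then 0 else 1 :: ennreal)" for e
  have "(\<Sum>e\<in>E. return_gf 1 y e * w e) \<le> w y" if y: "y \<in> B" for y
  proof (cases "y \<in> never_absorbed")
    case False
    have "(\<Sum>e\<in>E. return_gf 1 y e * w e) \<le> (\<Sum>e\<in>E. return_gf 1 y e)"
      by (intro sum_mono) (auto simp: w_def)
    also have "\<dots> \<le> 1" using sum_return_gf_1_le_1 y B_subset by auto
    finally show ?thesis using False by (simp add: w_def)
  next
    case True
    have "return_gf 1 y e * w e = 0" if "e \<in> E" for e
      using never_absorbed_closed[OF True that] return_gf_1_eq[of y e] y B_subset that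
      by (fastforce simp: w_def)
    then show ?thesis by (simp add: sum.neutral)
  qed
  moreover have "1 \<le> w k" using k_notin_B unfolding w_def never_absorbed_def by simp
  ultimately have "target_gf 1 x \<le> (\<Sum>e\<in>E. entry_gf 1 e x * w e)"
    using x B_subset by (intro target_gf_le_entry_gf) auto
  also have "\<dots> = 0"
    using sum_entry_gf_on_E[of x 1 w] x B_subset_E \<open>x \<in> never_absorbed\<close> by (auto simp: w_def)
  finally show False using target_gf_1_pos x B_subset by fastforce
qed

lemma return_gf_le_const:
  assumes "0 < \<alpha>" "\<alpha> \<le> alpha_drift" "0 \<le> l" "l * (1 + \<alpha> * m1 / 2) \<le> 1" "x \<in> B" "e \<in> E"
  shows "return_gf (ennreal l) x e \<le> ennreal (l * exp (\<alpha> * k0) * exp_fst_const)"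
proof -
  have x: "0 \<le> x" "x < k0" using assms B_subset by auto
  have "(\<integral>\<^sup>+ v. entry_gf (ennreal l) e v \<partial>measure_pmf (kerX x)) \<le> (\<integral>\<^sup>+ v. ennreal (exp (\<alpha> * v)) \<partial>measure_pmf (kerX x))"
  proof (rule nn_integral_mono_AE, unfold AE_measure_pmf_iff, intro ballI)
    fix v assume "v \<in> set_pmf (kerX x)"
    then have "0 \<le> v" using kerX_nonneg x by blast
    have "entry_gf (ennreal l) e v \<le> (\<Sum>e\<in>E. entry_gf (ennreal l) e v)"
      using assms finite_E by (intro member_le_sum) auto
    also have "\<dots> \<le> ennreal (exp (\<alpha> * v))" using sum_entry_gf_le_exp assms \<open>0 \<le> v\<close> by blast
    finally show "entry_gf (ennreal l) e v \<le> ennreal (exp (\<alpha> * v))" .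
  qed
  also have "\<dots> \<le> ennreal (exp (\<alpha> * x) * exp_fst_const)"
    using kerX_exp_le assms alpha_drift_le by auto
  also have "\<dots> \<le> ennreal (exp (\<alpha> * k0) * exp_fst_const)"
    using x assms exp_fst_const_pos by (intro ennreal_leI mult_right_mono) auto
  finally show ?thesis
    unfolding return_gf_def using assms exp_fst_const_pos
    by (simp add: ennreal_mult mult.assoc mult_left_mono)
qed

lemma return_gf_near_1:
  assumes "0 < \<alpha>" "\<alpha> \<le> alpha_drift" "l0 * (1 + \<alpha> * m1 / 2) \<le> 1" "1 < l0"
    and "1 \<le> l" "l \<le> l0" "x \<in> B" "e \<in> E"
  shows "return_gf (ennreal l) x e
    \<le> ennreal (ret1 x e + (l - 1) / (l0 - 1) * (l0 * exp (\<alpha> * k0) * exp_fst_const))"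
proof -
  have "return_gf (ennreal l) x e \<le> return_gf 1 x e + ennreal ((l - 1) / (l0 - 1)) * return_gf (ennreal l0) x e"
    using return_gf_interpolation assms by blast
  also have "\<dots> \<le> ennreal (ret1 x e) + ennreal ((l - 1) / (l0 - 1)) * ennreal (l0 * exp (\<alpha> * k0) * exp_fst_const)"
    using return_gf_1_eq return_gf_le_const[of \<alpha> l0 x e] assms B_subset
    by (intro add_mono mult_left_mono) auto
  also have "\<dots> = ennreal (ret1 x e + (l - 1) / (l0 - 1) * (l0 * exp (\<alpha> * k0) * exp_fst_const))"
    using assms exp_fst_const_pos
    by (subst ennreal_mult[symmetric], simp_all, subst ennreal_plus[symmetric]) (simp_all add: ret1_def)
  finally show ?thesis .
qed

definition is_return_supersolution :: "real \<Rightarrow> (int \<Rightarrow> real) \<Rightarrow> bool" where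
  "is_return_supersolution l v \<longleftrightarrow> (\<forall>x\<in>B. 0 \<le> v x) \<and> (\<forall>x\<in>B.
     return_gf (ennreal l) x k + (\<Sum>e\<in>B. return_gf (ennreal l) x e * ennreal (v e)) \<le> ennreal (v x))"

lemma is_return_supersolutionI:
  assumes M: "\<And>x e. x \<in> B \<Longrightarrow> e \<in> E \<Longrightarrow> return_gf (ennreal l) x e = ennreal (M x e) \<and> 0 \<le> M x e"
    and v: "\<forall>x\<in>B. 0 \<le> v x" "\<forall>x\<in>B. (\<Sum>e\<in>B. M x e * v e) + M x k \<le> v x"
  shows "is_return_supersolution l v"
  unfolding is_return_supersolution_def
proof (intro conjI v(1) ballI)
  fix x assume "x \<in> B"
  have nonneg: "0 \<le> M x e * v e" if "e \<in> B" for e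
    using M[OF \<open>x \<in> B\<close>] that B_subset_E v(1) by auto
  have "(\<Sum>e\<in>B. return_gf (ennreal l) x e * ennreal (v e)) = (\<Sum>e\<in>B. ennreal (M x e * v e))"
    using M[OF \<open>x \<in> B\<close>] B_subset_E v(1) by (intro sum.cong) (auto simp: ennreal_mult)
  also have "\<dots> = ennreal (\<Sum>e\<in>B. M x e * v e)" using nonneg by (rule sum_ennreal)
  finally have "return_gf (ennreal l) x k + (\<Sum>e\<in>B. return_gf (ennreal l) x e * ennreal (v e))
      = ennreal ((\<Sum>e\<in>B. M x e * v e) + M x k)"
    using M[OF \<open>x \<in> B\<close> k_in_E] nonneg by (simp add: sum_nonneg ennreal_plus add.commute)
  then show "return_gf (ennreal l) x k + (\<Sum>e\<in>B. return_gf (ennreal l) x e * ennreal (v e)) \<le> ennreal (v x)"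
    using v(2) \<open>x \<in> B\<close> by (simp add: ennreal_leI)
qed

lemma return_supersolution_exists:
  obtains l1 where "1 < l1" and "\<And>l. 1 < l \<Longrightarrow> l \<le> l1 \<Longrightarrow> \<exists>v. is_return_supersolution l v"
proof -
  define \<alpha> where "\<alpha> = alpha_drift"
  define l0 where "l0 = 1 / (1 + \<alpha> * m1 / 2)"
  have \<alpha>: "0 < \<alpha>" "\<alpha> \<le> alpha_drift" unfolding \<alpha>_def using alpha_drift_pos by auto
  have l0: "1 < l0" "l0 * (1 + \<alpha> * m1 / 2) \<le> 1"
    unfolding l0_def using drift_factor_bounds[OF \<alpha>] by auto
  define K0 where "K0 = l0 * exp (\<alpha> * k0) * exp_fst_const"
  have "0 \<le> K0" unfolding K0_def using l0 exp_fst_const_pos by simp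
  obtain \<eta>0 where \<eta>0: "0 < \<eta>0" and perturbed: "\<And>\<eta> M' a'. 0 \<le> \<eta> \<Longrightarrow> \<eta> \<le> \<eta>0
      \<Longrightarrow> (\<And>x e. x \<in> B \<Longrightarrow> e \<in> B \<Longrightarrow> 0 \<le> M' x e \<and> M' x e \<le> ret1 x e + \<eta> * K0)
      \<Longrightarrow> (\<And>x. x \<in> B \<Longrightarrow> a' x \<le> ret1 x k + \<eta> * K0)
      \<Longrightarrow> \<exists>v. (\<forall>x\<in>B. 0 \<le> v x) \<and> (\<forall>x\<in>B. (\<Sum>e\<in>B. M' x e * v e) + a' x \<le> v x)"
    using ret1.perturbed_supersolution[OF absorb_reachable \<open>0 \<le> K0\<close>] by blast
  define l1 where "l1 = 1 + min \<eta>0 1 * (l0 - 1)"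
  have "1 < l1" unfolding l1_def using \<eta>0 l0 by simp
  moreover have "\<exists>v. is_return_supersolution l v" if l: "1 < l" "l \<le> l1" for l
  proof -
    define \<eta> where "\<eta> = (l - 1) / (l0 - 1)"
    have "l - 1 \<le> min \<eta>0 1 * (l0 - 1)" using l unfolding l1_def by simp
    then have "\<eta> \<le> min \<eta>0 1" unfolding \<eta>_def using l0 by (simp only: pos_divide_le_eq)
    moreover have "0 \<le> \<eta>" unfolding \<eta>_def using l l0 by simp
    ultimately have \<eta>: "0 \<le> \<eta>" "\<eta> \<le> \<eta>0" "l \<le> l0"
      using l0 unfolding \<eta>_def by (auto simp: pos_divide_le_eq)
    define M where "M x e = enn2real (return_gf (ennreal l) x e)" for x e
    have M: "return_gf (ennreal l) x e = ennreal (M x e) \<and> 0 \<le> M x e \<and> M x e \<le> ret1 x e + \<eta> * K0"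
      if "x \<in> B" "e \<in> E" for x e
    proof -
      have le: "return_gf (ennreal l) x e \<le> ennreal (ret1 x e + \<eta> * K0)"
        using return_gf_near_1[OF \<alpha> l0(2,1) _ \<open>l \<le> l0\<close> that] l unfolding \<eta>_def K0_def by simp
      moreover have "0 \<le> ret1 x e + \<eta> * K0" using \<eta> \<open>0 \<le> K0\<close> by (simp add: ret1_def)
      ultimately show ?thesis
        unfolding M_def using le_less_trans[OF le ennreal_less_top] by (simp add: enn2real_leI)
    qed
    then obtain v where "\<forall>x\<in>B. 0 \<le> v x" "\<forall>x\<in>B. (\<Sum>e\<in>B. M x e * v e) + M x k \<le> v x"
      using perturbed[OF \<eta>(1,2), of M "\<lambda>x. M x k"] B_subset_E k_in_E by blast
    then show ?thesis using M by (blast intro: is_return_supersolutionI)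
  qed
  ultimately show ?thesis by (rule that)
qed

lemma target_gf_le_exp:
  assumes "0 < \<alpha>" "\<alpha> \<le> alpha_drift" "0 \<le> l" "l * (1 + \<alpha> * m1 / 2) \<le> 1"
    and v: "is_return_supersolution l v" and "0 \<le> y"
  shows "target_gf (ennreal l) y \<le> ennreal ((1 + (\<Sum>e\<in>B. v e)) * exp (\<alpha> * y))"
proof -
  define w where "w e = (if e = k then 1 else ennreal (v e))" for e
  have v_nonneg: "\<forall>x\<in>B. 0 \<le> v x"
    and v_super: "\<forall>x\<in>B. return_gf (ennreal l) x k + (\<Sum>e\<in>B. return_gf (ennreal l) x e * ennreal (v e)) \<le> ennreal (v x)"
    using v unfolding is_return_supersolution_def by auto
  define W where "W = 1 + (\<Sum>e\<in>B. v e)"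
  have "1 \<le> W" unfolding W_def using v_nonneg by (simp add: sum_nonneg)
  have w_le: "w e \<le> ennreal W" if "e \<in> E" for e
  proof (cases "e = k")
    case False
    then have "e \<in> B" using that E_eq by auto
    then have "v e \<le> (\<Sum>e\<in>B. v e)" using finite_B v_nonneg by (intro member_le_sum) auto
    then show ?thesis using False unfolding W_def w_def by (simp add: ennreal_leI)
  qed (use \<open>1 \<le> W\<close> w_def in auto)
  have "(\<Sum>e\<in>E. return_gf (ennreal l) x e * w e) \<le> w x" if "x \<in> B" for x
  proof -
    have "(\<Sum>e\<in>B. return_gf (ennreal l) x e * w e) = (\<Sum>e\<in>B. return_gf (ennreal l) x e * ennreal (v e))"
      using k_notin_B by (intro sum.cong) (auto simp: w_def)
    then show ?thesis
      using v_super that k_notin_B finite_B unfolding E_eq by (auto simp: w_def)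
  qed
  then have "target_gf (ennreal l) y \<le> (\<Sum>e\<in>E. entry_gf (ennreal l) e y * w e)"
    using \<open>0 \<le> y\<close> by (intro target_gf_le_entry_gf) (auto simp: w_def)
  also have "\<dots> \<le> (\<Sum>e\<in>E. entry_gf (ennreal l) e y) * ennreal W"
    unfolding sum_distrib_right by (intro sum_mono mult_left_mono w_le) auto
  also have "\<dots> \<le> ennreal (exp (\<alpha> * y)) * ennreal W"
    using sum_entry_gf_le_exp assms by (intro mult_right_mono) auto
  finally show ?thesis using \<open>1 \<le> W\<close> unfolding W_def by (simp add: ennreal_mult mult.commute)
qed

lemma target_gf_exp_bound:
  assumes "0 < \<theta>"
  obtains l C where "1 < l" "0 \<le> C"
    "\<And>x. 0 \<le> x \<Longrightarrow> (\<integral>\<^sup>+ v. target_gf (ennreal l) v \<partial>measure_pmf (kerX x)) \<le> ennreal (C * exp (\<theta> * x))"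
proof -
  obtain l1 where "1 < l1" and super: "\<And>l. 1 < l \<Longrightarrow> l \<le> l1 \<Longrightarrow> \<exists>v. is_return_supersolution l v"
    using return_supersolution_exists by blast
  define \<alpha> where "\<alpha> = min \<theta> alpha_drift"
  have \<alpha>: "0 < \<alpha>" "\<alpha> \<le> alpha_drift" "\<alpha> \<le> \<theta>" "\<alpha> \<le> d"
    unfolding \<alpha>_def using assms alpha_drift_pos alpha_drift_le by auto
  define \<rho> where "\<rho> = 1 + \<alpha> * m1 / 2"
  have \<rho>: "0 < \<rho>" "\<rho> < 1" unfolding \<rho>_def using drift_factor_bounds[OF \<alpha>(1,2)] by auto
  define l where "l = min (1 / \<rho>) l1"
  have "1 < 1 / \<rho>" using \<rho> by simp
  then have "1 < l" "l \<le> l1" unfolding l_def using \<open>1 < l1\<close> by auto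
  moreover have "l * \<rho> \<le> 1 / \<rho> * \<rho>" using \<rho> unfolding l_def by (intro mult_right_mono) auto
  ultimately have l: "1 < l" "l \<le> l1" "l * (1 + \<alpha> * m1 / 2) \<le> 1"
    using \<rho> unfolding \<rho>_def by auto
  obtain v where v: "is_return_supersolution l v" using super[OF l(1,2)] by blast
  define W where "W = 1 + (\<Sum>e\<in>B. v e)"
  have "0 \<le> W" using v unfolding W_def is_return_supersolution_def by (simp add: sum_nonneg add_nonneg_nonneg)
  have "(\<integral>\<^sup>+ v. target_gf (ennreal l) v \<partial>measure_pmf (kerX x)) \<le> ennreal (W * exp_fst_const * exp (\<theta> * x))"
    if "0 \<le> x" for x
  proof -
    have "target_gf (ennreal l) y \<le> ennreal (W * exp (\<alpha> * y))" if "0 \<le> y" for y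
      using target_gf_le_exp[OF \<alpha>(1,2) _ l(3) v that] l unfolding W_def by simp
    then show ?thesis
      using nn_integral_kerX_le_exp[of "target_gf (ennreal l)" W \<alpha> \<theta> x] \<alpha> \<open>0 \<le> W\<close> that by simp
  qed
  then show ?thesis
    using that[OF l(1), of "W * exp_fst_const"] \<open>0 \<le> W\<close> exp_fst_const_pos by simp
qed

section \<open>The second coordinate at the hitting time\<close>

lemma hitA_eq_hit_at: "hitA K k N t w = hit_at K (\<lambda>w. fst w = k) (\<lambda>w. if int N \<le> \<bar>snd w\<bar> then 1 else 0) 1 t w"
proof (induction t arbitrary: w)
  case (Suc t)
  have "hitA K k N t = hit_at K (\<lambda>w. fst w = k) (\<lambda>w. if int N \<le> \<bar>snd w\<bar> then 1 else 0) 1 t"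
    using Suc.IH by (rule ext)
  then show ?case by simp
qed simp

lemma hitA_le_hit_at_kerX: "hitA K k N t w \<le> hit_at kerX (\<lambda>x. x = k) (\<lambda>_. 1) 1 t (fst w)"
proof -
  have "hitA K k N t w \<le> hit_at K (\<lambda>w. fst w = k) (\<lambda>_. 1) 1 t w"
    unfolding hitA_eq_hit_at by (intro hit_at_mono) simp
  also have "\<dots> = hit_at kerX (\<lambda>x. x = k) (\<lambda>_. 1) 1 t (fst w)"
    using hit_at_lumped[of fst K kerX "\<lambda>x. x = k" "\<lambda>_. 1"] map_fst_kerZ1 by simp
  finally show ?thesis .
qed

definition phi :: "real \<Rightarrow> real" where
  "phi y = exp (g * y) + exp (- g * y)"

definition growth_const :: real where
  "growth_const = c * exp (d * k0) + exp (g * k0) + 2"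

lemma growth_const_ge_2: "2 \<le> growth_const"
  unfolding growth_const_def using c_pos by (simp add: add_nonneg_nonneg)

lemma phi_pos: "0 < phi y"
  unfolding phi_def by (simp add: add_pos_pos)

lemma phi_growth:
  "(\<integral>\<^sup>+ v. ennreal (phi (real_of_int (snd v))) \<partial>measure_pmf (K w)) \<le> ennreal (growth_const * phi (real_of_int (snd w)))"
proof -
  let ?y = "real_of_int (snd w)"
  have "(\<integral>\<^sup>+ v. ennreal (phi (real_of_int (snd v))) \<partial>measure_pmf (K w))
      = (\<integral>\<^sup>+ ab. ennreal (exp (g * ?y)) * ennreal (exp (g * real_of_int (snd ab)))
              + ennreal (exp (- g * ?y)) * ennreal (exp (- g * real_of_int (snd ab))) \<partial>measure_pmf (incr (fst w)))"
    unfolding nn_integral_kerZ1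
  proof (intro nn_integral_cong)
    fix ab :: "int \<times> int"
    have "phi (?y + real_of_int (snd ab))
        = exp (g * ?y) * exp (g * real_of_int (snd ab)) + exp (- g * ?y) * exp (- g * real_of_int (snd ab))"
      unfolding phi_def by (simp add: distrib_left flip: exp_add)
    then show "ennreal (phi (real_of_int (snd (fst w + fst ab, snd w + snd ab))))
        = ennreal (exp (g * ?y)) * ennreal (exp (g * real_of_int (snd ab)))
          + ennreal (exp (- g * ?y)) * ennreal (exp (- g * real_of_int (snd ab)))"
      by (simp add: ennreal_plus ennreal_mult)
  qed
  also have "\<dots> = ennreal (exp (g * ?y)) * (\<integral>\<^sup>+ ab. ennreal (exp (g * real_of_int (snd ab))) \<partial>measure_pmf (incr (fst w)))
      + ennreal (exp (- g * ?y)) * (\<integral>\<^sup>+ ab. ennreal (exp (- g * real_of_int (snd ab))) \<partial>measure_pmf (incr (fst w)))"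
    by (subst nn_integral_add) (auto simp: nn_integral_cmult)
  also have "\<dots> \<le> ennreal (exp (g * ?y)) * ennreal (c * exp (d * k0)) + ennreal (exp (- g * ?y)) * ennreal (exp (g * k0))"
    using incr_exp_snd_le incr_exp_neg_snd_le by (intro add_mono mult_left_mono) auto
  also have "\<dots> = ennreal (exp (g * ?y) * (c * exp (d * k0)) + exp (- g * ?y) * exp (g * k0))"
    using c_pos by (simp add: ennreal_mult ennreal_plus)
  also have "\<dots> \<le> ennreal (exp (g * ?y) * growth_const + exp (- g * ?y) * growth_const)"
    using c_pos unfolding growth_const_def by (intro ennreal_leI add_mono mult_left_mono) auto
  also have "\<dots> = ennreal (growth_const * phi ?y)"
    unfolding phi_def by (simp add: algebra_simps)
  finally show ?thesis .
qed

text \<open>Chernoff bound: \<open>phi (Y)\<close> grows at most geometrically along the walk.\<close>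
lemma hitA_le_geometric: "hitA K k N t w \<le> ennreal (exp (- g * N) * growth_const ^ t * phi (real_of_int (snd w)))"
proof -
  define V where "V w = ennreal (exp (- g * N) * phi (real_of_int (snd w)))" for w :: "int \<times> int"
  have "hit_at K (\<lambda>w. fst w = k) (\<lambda>w. if int N \<le> \<bar>snd w\<bar> then 1 else 0) 1 t w \<le> ennreal growth_const ^ t * V w"
  proof (rule hit_at_le_geometric)
    show "(if int N \<le> \<bar>snd w\<bar> then 1 else 0) \<le> V w" for w
    proof (cases "int N \<le> \<bar>snd w\<bar>")
      case True
      then have "exp (g * N) \<le> exp (g * \<bar>real_of_int (snd w)\<bar>)" using g_pos by simp
      also have "\<dots> \<le> phi (real_of_int (snd w))" unfolding phi_def by (cases "0 \<le> snd w") (auto simp: abs_if)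
      finally show ?thesis using True unfolding V_def by (simp add: exp_minus field_simps ennreal_leI)
    qed (simp add: V_def)
    show "(\<integral>\<^sup>+ v. V v \<partial>measure_pmf (K w)) \<le> ennreal growth_const * V w" for w
    proof -
      have "(\<integral>\<^sup>+ v. V v \<partial>measure_pmf (K w))
          = ennreal (exp (- g * N)) * (\<integral>\<^sup>+ v. ennreal (phi (real_of_int (snd v))) \<partial>measure_pmf (K w))"
        unfolding V_def using less_imp_le[OF phi_pos] by (simp add: ennreal_mult'' nn_integral_cmult)
      also have "\<dots> \<le> ennreal (exp (- g * N)) * ennreal (growth_const * phi (real_of_int (snd w)))"
        by (intro mult_left_mono phi_growth) simp
      also have "\<dots> = ennreal growth_const * V w"
        unfolding V_def using less_imp_le[OF phi_pos] growth_const_ge_2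
        by (simp add: ennreal_mult[symmetric] mult_ac)
      finally show ?thesis .
    qed
  qed
  then show ?thesis
    unfolding hitA_eq_hit_at V_def using phi_pos growth_const_ge_2
    by (simp add: ennreal_power ennreal_mult'' mult_ac)
qed

lemma nn_integral_hitA_le:
  "(\<integral>\<^sup>+ v. hitA K k N t v \<partial>measure_pmf (K (x, 0))) \<le> ennreal (2 * exp (- g * N) * growth_const ^ Suc t)"
proof -
  have "(\<integral>\<^sup>+ v. hitA K k N t v \<partial>measure_pmf (K (x, 0)))
      \<le> (\<integral>\<^sup>+ v. ennreal (exp (- g * N) * growth_const ^ t) * ennreal (phi (real_of_int (snd v))) \<partial>measure_pmf (K (x, 0)))"
    using hitA_le_geometric less_imp_le[OF phi_pos] by (simp add: nn_integral_mono flip: ennreal_mult'')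
  also have "\<dots> = ennreal (exp (- g * N) * growth_const ^ t) * (\<integral>\<^sup>+ v. ennreal (phi (real_of_int (snd v))) \<partial>measure_pmf (K (x, 0)))"
    by (simp add: nn_integral_cmult)
  also have "\<dots> \<le> ennreal (exp (- g * N) * growth_const ^ t) * ennreal (growth_const * 2)"
    using phi_growth[of "(x, 0)"] by (intro mult_left_mono) (auto simp: phi_def)
  finally show ?thesis using growth_const_ge_2 by (simp add: ennreal_mult'' mult_ac)
qed

lemma early_hits_le:
  fixes i :: nat
  assumes "real m * ln growth_const \<le> g * N / 2" and "\<delta> \<le> g / 2" "0 \<le> \<theta>"
  shows "(\<Sum>t<m. \<integral>\<^sup>+ v. hitA K k N t v \<partial>measure_pmf (K (x, 0))) \<le> ennreal (4 * exp (\<theta> * real i - \<delta> * N))"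
proof -
  have "(\<Sum>t<m. \<integral>\<^sup>+ v. hitA K k N t v \<partial>measure_pmf (K (x, 0)))
      \<le> ennreal (2 * exp (- g * N) * (\<Sum>t<m. growth_const ^ Suc t))"
    using nn_integral_hitA_le growth_const_ge_2
    by (simp add: sum_mono sum_ennreal sum_distrib_left flip: sum_ennreal)
  also have "\<dots> \<le> ennreal (2 * exp (- g * N) * (2 * exp (g * N / 2)))"
  proof -
    have "growth_const ^ m = exp (real m * ln growth_const)"
      using growth_const_ge_2 by (simp add: exp_of_nat_mult)
    then have "growth_const ^ m \<le> exp (g * N / 2)" using assms by simp
    then show ?thesis
      using sum_power_Suc_le[OF growth_const_ge_2, of m] by (intro ennreal_leI mult_left_mono) auto
  qed
  also have "\<dots> = ennreal (4 * exp (- g * N / 2))"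
    by (simp add: mult_ac flip: exp_add)
  also have "\<dots> \<le> ennreal (4 * exp (\<theta> * real i - \<delta> * N))"
  proof -
    have "\<delta> * N \<le> g / 2 * N" using assms by (intro mult_right_mono) auto
    moreover have "0 \<le> \<theta> * real i" using assms by simp
    ultimately have "- g * N / 2 \<le> \<theta> * real i - \<delta> * N" by simp
    then show ?thesis by (intro ennreal_leI mult_left_mono) auto
  qed
  finally show ?thesis .
qed

lemma late_hits_le:
  assumes "1 \<le> l"
  shows "(\<Sum>t. \<integral>\<^sup>+ v. hitA K k N (t + m) v \<partial>measure_pmf (K w))
    \<le> ennreal (1 / l ^ m) * (\<integral>\<^sup>+ v. target_gf (ennreal l) v \<partial>measure_pmf (kerX (fst w)))"
proof -
  let ?b = "\<lambda>t. \<integral>\<^sup>+ v. hit_at kerX (\<lambda>x. x = k) (\<lambda>_. 1) 1 t v \<partial>measure_pmf (kerX (fst w))"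
  have "(\<integral>\<^sup>+ v. hitA K k N t v \<partial>measure_pmf (K w)) \<le> ?b t" for t
  proof -
    have "(\<integral>\<^sup>+ v. hitA K k N t v \<partial>measure_pmf (K w))
        \<le> (\<integral>\<^sup>+ v. hit_at kerX (\<lambda>x. x = k) (\<lambda>_. 1) 1 t (fst v) \<partial>measure_pmf (K w))"
      by (intro nn_integral_mono hitA_le_hit_at_kerX)
    then show ?thesis by (simp flip: map_fst_kerZ1)
  qed
  then have "(\<Sum>t. \<integral>\<^sup>+ v. hitA K k N (t + m) v \<partial>measure_pmf (K w)) \<le> (\<Sum>t. ?b (t + m))"
    by (intro suminf_le) (auto simp: summableI)
  also have "\<dots> = ennreal (1 / l ^ m) * (ennreal (l ^ m) * (\<Sum>t. ?b (t + m)))"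
    using assms by (simp add: mult.assoc[symmetric] ennreal_mult[symmetric])
  also have "\<dots> \<le> ennreal (1 / l ^ m) * (\<Sum>t. ennreal (l ^ t) * ?b t)"
    using assms by (intro mult_left_mono weighted_suminf_shift_le) auto
  also have "(\<Sum>t. ennreal (l ^ t) * ?b t) = (\<integral>\<^sup>+ v. target_gf (ennreal l) v \<partial>measure_pmf (kerX (fst w)))"
    unfolding target_gf_def using assms by (simp add: nn_integral_hit_gf_series)
  finally show ?thesis .
qed

lemma late_hits_exp_le:
  assumes l: "1 < l" and "0 \<le> C0"
    and target: "(\<integral>\<^sup>+ v. target_gf (ennreal l) v \<partial>measure_pmf (kerX (int i))) \<le> ennreal (C0 * exp (\<theta> * i))"
    and \<delta>: "\<delta> * N \<le> real (Suc m) * ln l"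
  shows "(\<Sum>t. \<integral>\<^sup>+ v. hitA K k N (t + m) v \<partial>measure_pmf (K (int i, 0)))
    \<le> ennreal (l * C0 * exp (\<theta> * i - \<delta> * N))"
proof -
  have "(\<Sum>t. \<integral>\<^sup>+ v. hitA K k N (t + m) v \<partial>measure_pmf (K (int i, 0)))
      \<le> ennreal (1 / l ^ m) * ennreal (C0 * exp (\<theta> * i))"
  proof -
    have "(\<Sum>t. \<integral>\<^sup>+ v. hitA K k N (t + m) v \<partial>measure_pmf (K (int i, 0)))
        \<le> ennreal (1 / l ^ m) * (\<integral>\<^sup>+ v. target_gf (ennreal l) v \<partial>measure_pmf (kerX (int i)))"
      using late_hits_le[where w = "(int i, 0)"] l by simp
    also have "\<dots> \<le> ennreal (1 / l ^ m) * ennreal (C0 * exp (\<theta> * i))"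
      using target by (rule mult_left_mono) simp
    finally show ?thesis .
  qed
  also have "\<dots> \<le> ennreal (l * C0 * exp (\<theta> * i - \<delta> * N))"
  proof -
    have "1 / l ^ m \<le> l * exp (- (\<delta> * N))"
      using inverse_power_le_exp[OF l \<delta>] by simp
    then have "1 / l ^ m * (C0 * exp (\<theta> * i)) \<le> l * exp (- (\<delta> * N)) * (C0 * exp (\<theta> * i))"
      using \<open>0 \<le> C0\<close> by (intro mult_right_mono) auto
    then show ?thesis
      using l \<open>0 \<le> C0\<close> by (simp add: ennreal_mult[symmetric] exp_diff exp_minus field_simps)
  qed
  finally show ?thesis .
qed

theorem prob_hit_Y_ge_le:
  assumes "0 < \<theta>"
  shows "\<exists>C>0. \<exists>\<delta>>0. \<forall>i n::nat. prob_hit_Y_ge K k n (int i, 0) \<le> ennreal (C * exp (\<theta> * real i - \<delta> * real n))"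
proof -
  obtain l C0 where l: "1 < l" and "0 \<le> C0"
    and target: "\<And>x. 0 \<le> x \<Longrightarrow> (\<integral>\<^sup>+ v. target_gf (ennreal l) v \<partial>measure_pmf (kerX x)) \<le> ennreal (C0 * exp (\<theta> * x))"
    using target_gf_exp_bound[OF assms] by blast
  define r :: nat where "r = nat \<lceil>2 * ln growth_const / g\<rceil> + 1"
  have "0 < r" unfolding r_def by simp
  have "2 * ln growth_const / g \<le> real r" unfolding r_def by linarith
  then have r: "ln growth_const \<le> real r * g / 2" using g_pos by (simp add: field_simps)
  define \<delta> where "\<delta> = min (g / 2) (ln l / real r)"
  have \<delta>: "0 < \<delta>" "\<delta> \<le> g / 2" "\<delta> * real r \<le> ln l"
    unfolding \<delta>_def using g_pos l \<open>0 < r\<close> by (auto simp: min_def field_simps)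
  have "prob_hit_Y_ge K k n (int i, 0) \<le> ennreal ((4 + l * C0) * exp (\<theta> * real i - \<delta> * real n))" for i n
  proof -
    define m where "m = n div r"
    have "m * r \<le> n" "n \<le> Suc m * r"
      unfolding m_def using dividend_less_div_times[OF \<open>0 < r\<close>, of n] by simp_all
    then have m: "real m * real r \<le> real n" "real n \<le> real (Suc m) * real r"
      by (metis of_nat_le_iff of_nat_mult)+
    have "real m * ln growth_const \<le> real m * (real r * g / 2)" using r by (rule mult_left_mono) simp
    also have "\<dots> \<le> g * n / 2" using m(1) g_pos by (simp add: mult_ac mult_right_mono)
    finally have early: "(\<Sum>t<m. \<integral>\<^sup>+ v. hitA K k n t v \<partial>measure_pmf (K (int i, 0)))
        \<le> ennreal (4 * exp (\<theta> * real i - \<delta> * real n))"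
      using \<delta> assms by (intro early_hits_le) auto
    have "\<delta> * n \<le> \<delta> * (real (Suc m) * real r)" using m(2) \<delta> by (intro mult_left_mono) auto
    also have "\<dots> \<le> real (Suc m) * ln l" using \<delta>(3) by (simp add: mult_ac mult_left_mono)
    finally have late: "(\<Sum>t. \<integral>\<^sup>+ v. hitA K k n (t + m) v \<partial>measure_pmf (K (int i, 0)))
        \<le> ennreal (l * C0 * exp (\<theta> * real i - \<delta> * real n))"
      using target[of "int i"] l \<open>0 \<le> C0\<close> by (intro late_hits_exp_le) auto
    have "prob_hit_Y_ge K k n (int i, 0)
        = (\<Sum>t. \<integral>\<^sup>+ v. hitA K k n (t + m) v \<partial>measure_pmf (K (int i, 0)))
          + (\<Sum>t<m. \<integral>\<^sup>+ v. hitA K k n t v \<partial>measure_pmf (K (int i, 0)))"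
      unfolding prob_hit_Y_ge_def by (rule suminf_offset) (simp add: summableI)
    also have "\<dots> \<le> ennreal (l * C0 * exp (\<theta> * real i - \<delta> * real n)) + ennreal (4 * exp (\<theta> * real i - \<delta> * real n))"
      using early late by (rule add_mono[rotated])
    also have "\<dots> = ennreal ((4 + l * C0) * exp (\<theta> * real i - \<delta> * real n))"
      using l \<open>0 \<le> C0\<close> by (simp add: algebra_simps flip: ennreal_plus)
    finally show ?thesis .
  qed
  moreover have "0 < 4 + l * C0" using l \<open>0 \<le> C0\<close> by (simp add: add_pos_nonneg)
  ultimately show ?thesis using \<delta>(1) by blast
qed

end

text \<open>\<open>Z\<^sub>1\<close> at \<open>(x, _)\<close> uses the increments of \<open>Z\<close> at \<open>(max x 0, k0)\<close>.\<close>
lemma Z1_increment_exp_moment: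
  assumes k0: "1 \<le> k0"
    and A2: "\<forall>i j. i \<ge> 0 \<longrightarrow> j \<ge> 0 \<longrightarrow>
      (\<integral>\<^sup>+ w. ennreal (exp (d * real_of_int (fst w - i) + g * real_of_int (snd w - j)))
         \<partial>measure_pmf (kerZ k0 mu mu1 mu2 mu0 (i, j))) \<le> ennreal c"
  shows "(\<integral>\<^sup>+ ab. ennreal (exp (d * real_of_int (fst ab) + g * real_of_int (snd ab)))
      \<partial>measure_pmf (if k0 \<le> x then mu else mu2 (nat x))) \<le> ennreal c"
proof (cases "k0 \<le> x")
  case True
  then have "(\<integral>\<^sup>+ w. ennreal (exp (d * real_of_int (fst w - x) + g * real_of_int (snd w - k0)))
      \<partial>measure_pmf (kerZ k0 mu mu1 mu2 mu0 (x, k0))) \<le> ennreal c"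
    using A2 k0 by auto
  then show ?thesis using True by (simp add: kerZ_def shift_def case_prod_beta)
next
  case False
  have "(\<integral>\<^sup>+ w. ennreal (exp (d * real_of_int (fst w - max x 0) + g * real_of_int (snd w - k0)))
      \<partial>measure_pmf (kerZ k0 mu mu1 mu2 mu0 (max x 0, k0))) \<le> ennreal c"
    using A2 k0 by simp
  moreover have "nat (max x 0) = nat x" "\<not> k0 \<le> max x 0" using False k0 by auto
  ultimately show ?thesis using False by (simp add: kerZ_def shift_def case_prod_beta)
qed

theorem lemma5p5:
  fixes k0 :: int
    and mu :: "(int \<times> int) pmf"
    and mu1 :: "nat \<Rightarrow> (int \<times> int) pmf"
    and mu2 :: "nat \<Rightarrow> (int \<times> int) pmf"
    and mu0 :: "nat \<Rightarrow> nat \<Rightarrow> (int \<times> int) pmf"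
  assumes k0: "k0 \<ge> 1"
    and A1_mu: "\<And>a b. a < - k0 \<or> b < - k0 \<Longrightarrow> pmf mu (a, b) = 0"
    and A1_mu1: "\<And>j a b. int j < k0 \<Longrightarrow> a < - k0 \<or> b < - int j \<Longrightarrow> pmf (mu1 j) (a, b) = 0"
    and A1_mu2: "\<And>i a b. int i < k0 \<Longrightarrow> b < - k0 \<or> a < - int i \<Longrightarrow> pmf (mu2 i) (a, b) = 0"
    and A1_mu0: "\<And>i j a b. int i < k0 \<Longrightarrow> int j < k0 \<Longrightarrow> a < - int i \<or> b < - int j
                   \<Longrightarrow> pmf (mu0 i j) (a, b) = 0"
    and A2: "\<exists>d g c. d > 0 \<and> g > 0 \<and> c > 0 \<and>
              (\<forall>i j. i \<ge> 0 \<longrightarrow> j \<ge> 0 \<longrightarrow>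
                 (\<integral>\<^sup>+ w. ennreal (exp (d * real_of_int (fst w - i) + g * real_of_int (snd w - j)))
                    \<partial>measure_pmf (kerZ k0 mu mu1 mu2 mu0 (i, j))) \<le> ennreal c)"
    and A3_Z0: "irreducible_on (kerZ0 mu) UNIV"
    and A3_Z1: "irreducible_on (kerZ1 k0 mu mu2) {z. fst z \<ge> 0}"
    and A3_Z2: "irreducible_on (kerZ2 k0 mu mu1) {z. snd z \<ge> 0}"
    and A3_Z: "irreducible_on (kerZ k0 mu mu1 mu2 mu0) {z. fst z \<ge> 0 \<and> snd z \<ge> 0}"
    and m1_neg: "measure_pmf.expectation mu (\<lambda>w. real_of_int (fst w)) < 0"
  shows "\<forall>\<theta>>0. \<forall>k::nat. \<exists>C>0. \<exists>\<delta>>0. \<forall>i n::nat.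
           prob_hit_Y_ge (kerZ1 k0 mu mu2) (int k) n (int i, 0)
             \<le> ennreal (C * exp (\<theta> * real i - \<delta> * real n))"
proof (intro allI impI)
  fix \<theta> :: real and k :: nat
  assume "0 < \<theta>"
  obtain d g c where "0 < d" "0 < g" "0 < c" and moments: "\<forall>i j. i \<ge> 0 \<longrightarrow> j \<ge> 0 \<longrightarrow>
      (\<integral>\<^sup>+ w. ennreal (exp (d * real_of_int (fst w - i) + g * real_of_int (snd w - j)))
         \<partial>measure_pmf (kerZ k0 mu mu1 mu2 mu0 (i, j))) \<le> ennreal c"
    using A2 by blast
  interpret half_plane_walk_target k0 mu mu2 d g c "int k"
    using k0 A1_mu A1_mu2 \<open>0 < d\<close> \<open>0 < g\<close> \<open>0 < c\<close> Z1_increment_exp_moment[OF k0 moments] A3_Z1 m1_neg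
    by unfold_locales auto
  show "\<exists>C>0. \<exists>\<delta>>0. \<forall>i n::nat. prob_hit_Y_ge (kerZ1 k0 mu mu2) (int k) n (int i, 0)
      \<le> ennreal (C * exp (\<theta> * real i - \<delta> * real n))"
    using prob_hit_Y_ge_le[OF \<open>0 < \<theta>\<close>] .
qed

end
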